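(* (a) For any tree $T$ of order at least two with $\sigma(T)$ leaves, $O_{\rm SR}(T)=\mathcal{M}$ if $\sigma(T)=2$, $O_{\rm SR}(T)=\mathcal{N}$ if $\sigma(T)=3$, and $O_{\rm SR}(T)=\mathcal{B}$ if $\sigma(T)\ge 4$. (b) For $n\ge 3$, $O_{\rm SR}(C_n)=\mathcal{M}$ if $n$ is even, $O_{\rm SR}(C_3)=\mathcal{N}$, and $O_{\rm SR}(C_n)=\mathcal{B}$ if $n\ge 5$ is odd. (c) For the Petersen graph $\mathcal{P}$, $O_{\rm SR}(\mathcal{P})=\mathcal{B}$. (d) For $m\ge 2$, let $G=K_{a_1,\ldots,a_m}$ be a complete $m$-partite graph of order $n=\sum_{i=1}^m a_i\ge 3$, and let $s$ be the number of partite sets of $G$ consisting of exactly one element. Then $O_{\rm SR}(G)=\mathcal{B}$ if $s\ge 4$, or $a_i\ge 4$ for some $i\in[m]$, or $s=a_i=3$ for some $i\in[m]$, or $a_i=a_j=3$ for distinct $i,j\in[m]$; $O_{\rm SR}(G)=\mathcal{N}$ if $s=3$ and $a_i\le 2$ for each $i\in[m]$, or if $s\le 2$, $a_i=3$ for exactly one $i\in[m]$ and $a_j\le 2$ for each $j\in[m]\setminus\{i\}$; and $O_{\rm SR}(G)=\mathcal{M}$ if $\max\{s,a_i\}\le 2$ for each $i\in[m]$.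
   Context: All graphs are finite, simple and undirected. $C_n$ is the cycle on $n$ vertices; $[m]=\{1,\dots,m\}$. A set $S\subseteq V(G)$ is a strong resolving set of a connected graph $G$ if for all distinct $x,y\in V(G)$ there exists $z\in S$ such that $x$ lies on a $y$–$z$ geodesic or $y$ lies on an $x$–$z$ geodesic. The Maker–Breaker strong resolving game on $G$: Maker and Breaker alternately select a not-yet-chosen vertex of $G$; Maker wins if the vertices he selects contain a strong resolving set of $G$, Breaker wins otherwise. In the M-game Maker moves first, in the B-game Breaker moves first. $O_{\rm SR}(G)=\mathcal{M}$ if Maker has a winning strategy in both games, $\mathcal{B}$ if Breaker has a winning strategy in both, and $\mathcal{N}$ if the first player has a winning strategy in each. *)

theory Defs
  imports Main
begin

definition simple_graph :: "'a set \<Rightarrow> ('a \<Rightarrow> 'a \<Rightarrow> bool) \<Rightarrow> bool" where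
  "simple_graph V E \<longleftrightarrow> finite V \<and> (\<forall>x y. E x y \<longrightarrow> x \<in> V \<and> y \<in> V)
     \<and> (\<forall>x y. E x y \<longrightarrow> E y x) \<and> (\<forall>x. \<not> E x x)"

text \<open>A walk is a nonempty list of vertices, consecutive ones adjacent.
  Its length (number of edges) is the list length minus one.\<close>
definition walk :: "'a set \<Rightarrow> ('a \<Rightarrow> 'a \<Rightarrow> bool) \<Rightarrow> 'a list \<Rightarrow> bool" where
  "walk V E xs \<longleftrightarrow> xs \<noteq> [] \<and> set xs \<subseteq> V \<and> (\<forall>i. Suc i < length xs \<longrightarrow> E (xs ! i) (xs ! Suc i))"

definition walk_between :: "'a set \<Rightarrow> ('a \<Rightarrow> 'a \<Rightarrow> bool) \<Rightarrow> 'a \<Rightarrow> 'a \<Rightarrow> 'a list \<Rightarrow> bool" where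
  "walk_between V E x y xs \<longleftrightarrow> walk V E xs \<and> hd xs = x \<and> last xs = y"

definition connected_graph :: "'a set \<Rightarrow> ('a \<Rightarrow> 'a \<Rightarrow> bool) \<Rightarrow> bool" where
  "connected_graph V E \<longleftrightarrow> V \<noteq> {} \<and> (\<forall>x\<in>V. \<forall>y\<in>V. \<exists>xs. walk_between V E x y xs)"

definition gdist :: "'a set \<Rightarrow> ('a \<Rightarrow> 'a \<Rightarrow> bool) \<Rightarrow> 'a \<Rightarrow> 'a \<Rightarrow> nat" where
  "gdist V E x y = (LEAST n. \<exists>xs. walk_between V E x y xs \<and> length xs = Suc n)"

definition geodesic :: "'a set \<Rightarrow> ('a \<Rightarrow> 'a \<Rightarrow> bool) \<Rightarrow> 'a \<Rightarrow> 'a \<Rightarrow> 'a list \<Rightarrow> bool" where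
  "geodesic V E y z xs \<longleftrightarrow> walk_between V E y z xs \<and> length xs = Suc (gdist V E y z)"

definition on_geodesic :: "'a set \<Rightarrow> ('a \<Rightarrow> 'a \<Rightarrow> bool) \<Rightarrow> 'a \<Rightarrow> 'a \<Rightarrow> 'a \<Rightarrow> bool" where
  "on_geodesic V E x y z \<longleftrightarrow> (\<exists>xs. geodesic V E y z xs \<and> x \<in> set xs)"

definition strong_resolving_set :: "'a set \<Rightarrow> ('a \<Rightarrow> 'a \<Rightarrow> bool) \<Rightarrow> 'a set \<Rightarrow> bool" where
  "strong_resolving_set V E S \<longleftrightarrow> S \<subseteq> V \<and>
     (\<forall>x\<in>V. \<forall>y\<in>V. x \<noteq> y \<longrightarrow> (\<exists>z\<in>S. on_geodesic V E x y z \<or> on_geodesic V E y x z))"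

text \<open>Position: Maker's set M, Breaker's set B; the boolean says whether it is
  Maker's turn.  The game ends when all of V is taken; Maker wins iff W M holds.
  maker_wins = Maker has a winning strategy from the position;
  breaker_wins = Breaker has a winning strategy from the position.\<close>
inductive maker_wins :: "'a set \<Rightarrow> ('a set \<Rightarrow> bool) \<Rightarrow> 'a set \<Rightarrow> 'a set \<Rightarrow> bool \<Rightarrow> bool"
  for V :: "'a set" and W :: "'a set \<Rightarrow> bool" where
  mw_end: "V - (M \<union> B) = {} \<Longrightarrow> W M \<Longrightarrow> maker_wins V W M B t"
| mw_maker: "v \<in> V - (M \<union> B) \<Longrightarrow> maker_wins V W (insert v M) B False \<Longrightarrow> maker_wins V W M B True"
| mw_breaker: "V - (M \<union> B) \<noteq> {} \<Longrightarrow> (\<forall>v\<in>V - (M \<union> B). maker_wins V W M (insert v B) True)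
     \<Longrightarrow> maker_wins V W M B False"

inductive breaker_wins :: "'a set \<Rightarrow> ('a set \<Rightarrow> bool) \<Rightarrow> 'a set \<Rightarrow> 'a set \<Rightarrow> bool \<Rightarrow> bool"
  for V :: "'a set" and W :: "'a set \<Rightarrow> bool" where
  bw_end: "V - (M \<union> B) = {} \<Longrightarrow> \<not> W M \<Longrightarrow> breaker_wins V W M B t"
| bw_breaker: "v \<in> V - (M \<union> B) \<Longrightarrow> breaker_wins V W M (insert v B) True \<Longrightarrow> breaker_wins V W M B False"
| bw_maker: "V - (M \<union> B) \<noteq> {} \<Longrightarrow> (\<forall>v\<in>V - (M \<union> B). breaker_wins V W (insert v M) B False)
     \<Longrightarrow> breaker_wins V W M B True"

definition SR_win :: "'a set \<Rightarrow> ('a \<Rightarrow> 'a \<Rightarrow> bool) \<Rightarrow> 'a set \<Rightarrow> bool" where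
  "SR_win V E M \<longleftrightarrow> (\<exists>S. S \<subseteq> M \<and> strong_resolving_set V E S)"

text \<open>M-game: Maker starts (turn = True); B-game: Breaker starts (turn = False).\<close>
definition maker_wins_M_game where "maker_wins_M_game V E = maker_wins V (SR_win V E) {} {} True"
definition maker_wins_B_game where "maker_wins_B_game V E = maker_wins V (SR_win V E) {} {} False"
definition breaker_wins_M_game where "breaker_wins_M_game V E = breaker_wins V (SR_win V E) {} {} True"
definition breaker_wins_B_game where "breaker_wins_B_game V E = breaker_wins V (SR_win V E) {} {} False"

datatype outcome = Out_M | Out_N | Out_B

definition O_SR_is :: "'a set \<Rightarrow> ('a \<Rightarrow> 'a \<Rightarrow> bool) \<Rightarrow> outcome \<Rightarrow> bool" where
  "O_SR_is V E out \<longleftrightarrow> (case out of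
      Out_M \<Rightarrow> maker_wins_M_game V E \<and> maker_wins_B_game V E
    | Out_B \<Rightarrow> breaker_wins_M_game V E \<and> breaker_wins_B_game V E
    | Out_N \<Rightarrow> maker_wins_M_game V E \<and> breaker_wins_B_game V E)"

definition has_cycle :: "'a set \<Rightarrow> ('a \<Rightarrow> 'a \<Rightarrow> bool) \<Rightarrow> bool" where
  "has_cycle V E \<longleftrightarrow> (\<exists>xs. walk V E xs \<and> distinct xs \<and> length xs \<ge> 3 \<and> E (last xs) (hd xs))"

definition is_tree :: "'a set \<Rightarrow> ('a \<Rightarrow> 'a \<Rightarrow> bool) \<Rightarrow> bool" where
  "is_tree V E \<longleftrightarrow> simple_graph V E \<and> connected_graph V E \<and> \<not> has_cycle V E"

definition degree :: "'a set \<Rightarrow> ('a \<Rightarrow> 'a \<Rightarrow> bool) \<Rightarrow> 'a \<Rightarrow> nat" where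
  "degree V E v = card {u \<in> V. E v u}"

definition num_leaves :: "'a set \<Rightarrow> ('a \<Rightarrow> 'a \<Rightarrow> bool) \<Rightarrow> nat" where
  "num_leaves V E = card {v \<in> V. degree V E v = 1}"

definition cycle_V :: "nat \<Rightarrow> nat set" where "cycle_V n = {0..<n}"
definition cycle_E :: "nat \<Rightarrow> nat \<Rightarrow> nat \<Rightarrow> bool" where
  "cycle_E n i j \<longleftrightarrow> i < n \<and> j < n \<and> (j = Suc i mod n \<or> i = Suc j mod n)"

text \<open>The Petersen graph as the Kneser graph K(5,2).\<close>
definition petersen_V :: "nat set set" where
  "petersen_V = {S. S \<subseteq> {0..<5} \<and> card S = 2}"
definition petersen_E :: "nat set \<Rightarrow> nat set \<Rightarrow> bool" where
  "petersen_E S T \<longleftrightarrow> S \<in> petersen_V \<and> T \<in> petersen_V \<and> S \<inter> T = {}"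

text \<open>Complete m-partite graph K_{a_1,...,a_m}: vertex (i,k) is the k-th vertex of part i.\<close>
definition multipartite_V :: "nat \<Rightarrow> (nat \<Rightarrow> nat) \<Rightarrow> (nat \<times> nat) set" where
  "multipartite_V m a = {(i, k). i \<in> {1..m} \<and> k < a i}"
definition multipartite_E :: "nat \<Rightarrow> (nat \<Rightarrow> nat) \<Rightarrow> nat \<times> nat \<Rightarrow> nat \<times> nat \<Rightarrow> bool" where
  "multipartite_E m a u v \<longleftrightarrow> u \<in> multipartite_V m a \<and> v \<in> multipartite_V m a \<and> fst u \<noteq> fst v"

end

theory Submission
  imports Defs
begin

text \<open>Every strong resolving set contains one of any two mutually maximally distant vertices,
  so such a pair is blocking: Breaker wins once he owns both of its vertices. Free vertices
  \<open>x\<close>, \<open>y\<close>, \<open>z\<close> with \<open>x\<close> blocking both \<open>y\<close> and \<open>z\<close> are therefore a double threat for Breaker.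
  Two leaves form a blocking pair, as a leaf never lies inside a geodesic; so do two vertices
  of a common partite set, two vertices forming singleton partite sets, two vertices at
  maximal distance in a cycle and two intersecting vertices of the Petersen graph, which are
  mutually maximally distant. A blocking clique of size three yields a double threat at once,
  and one of size four or two disjoint ones of size three yield one after any first move of
  Maker; odd cycles and the Petersen graph contain double threats around every vertex.

  Conversely, the leaves of a tree, the antipodal pairs of an even cycle, and the partite sets
  together with the set of singleton partite sets of a complete multipartite graph are
  disjoint groups such that every set containing all but at most one vertex of each group is
  strongly resolving. When all groups have at most two vertices, Maker wins by a pairing
  strategy; when one of them has three, Maker starts there and reduces to that case.\<close>

section \<open>Walks, distances and geodesics\<close>

lemma walk_iff_successively: "walk V E xs \<longleftrightarrow> xs \<noteq> [] \<and> set xs \<subseteq> V \<and> successively E xs"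
  unfolding walk_def successively_conv_nth by blast

lemma walk_between_singleton: "x \<in> V \<Longrightarrow> walk_between V E x x [x]"
  by (simp add: walk_between_def walk_iff_successively)

lemma walk_between_rev:
  assumes "simple_graph V E" "walk_between V E x y xs"
  shows "walk_between V E y x (rev xs)"
proof -
  have "successively (\<lambda>a b. E b a) xs" using assms
    by (auto simp: walk_between_def walk_iff_successively simple_graph_def intro: successively_mono)
  then show ?thesis
    using assms by (auto simp: walk_between_def walk_iff_successively hd_rev last_rev)
qed

lemma geodesic_exists:
  assumes "connected_graph V E" "x \<in> V" "y \<in> V"
  obtains xs where "geodesic V E x y xs"
proof -
  obtain xs where xs: "walk_between V E x y xs"
    using assms unfolding connected_graph_def by blast
  then have "xs \<noteq> []" by (simp add: walk_between_def walk_iff_successively)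
  then have "\<exists>n xs. walk_between V E x y xs \<and> length xs = Suc n"
    using xs by (intro exI[of _ "length xs - 1"] exI[of _ xs]) auto
  then have "\<exists>xs. walk_between V E x y xs \<and> length xs = Suc (gdist V E x y)"
    unfolding gdist_def by (rule LeastI_ex)
  then show ?thesis using that by (auto simp: geodesic_def)
qed

lemma gdist_le_walk_length:
  assumes "walk_between V E x y xs"
  shows "gdist V E x y \<le> length xs - 1"
proof -
  have "xs \<noteq> []" using assms by (simp add: walk_between_def walk_iff_successively)
  then have "walk_between V E x y xs \<and> length xs = Suc (length xs - 1)" using assms by simp
  then show ?thesis unfolding gdist_def by (intro Least_le) blast
qed

lemma gdist_refl: "x \<in> V \<Longrightarrow> gdist V E x x = 0"
  using gdist_le_walk_length[OF walk_between_singleton[of x V E]] by simp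

lemma gdist_adjacent: "E x y \<Longrightarrow> x \<in> V \<Longrightarrow> y \<in> V \<Longrightarrow> gdist V E x y \<le> 1"
  using gdist_le_walk_length[of V E x y "[x, y]"] by (simp add: walk_between_def walk_iff_successively)

lemma gdist_pos:
  assumes "connected_graph V E" "x \<in> V" "y \<in> V" "x \<noteq> y"
  shows "gdist V E x y \<ge> 1"
proof (rule ccontr)
  assume "\<not> gdist V E x y \<ge> 1"
  moreover obtain xs where "geodesic V E x y xs" using geodesic_exists[OF assms(1-3)] .
  ultimately have "walk_between V E x y xs" "length xs = 1" by (auto simp: geodesic_def)
  then show False using assms(4) by (cases xs) (auto simp: walk_between_def)
qed

lemma gdist_ge_2:
  assumes "connected_graph V E" "x \<in> V" "y \<in> V" "x \<noteq> y" "\<not> E x y"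
  shows "gdist V E x y \<ge> 2"
proof (rule ccontr)
  assume "\<not> gdist V E x y \<ge> 2"
  moreover obtain xs where "geodesic V E x y xs" using geodesic_exists[OF assms(1-3)] .
  ultimately have w: "walk_between V E x y xs" and "length xs \<le> 2" by (auto simp: geodesic_def)
  moreover have "length xs \<noteq> 1" using w assms(4) by (cases xs) (auto simp: walk_between_def)
  moreover have "xs \<noteq> []" using w by (auto simp: walk_between_def walk_iff_successively)
  ultimately obtain u v where "xs = [u, v]"
    by (cases xs; cases "tl xs") (auto simp: le_Suc_eq)
  then show False using w assms(5) by (auto simp: walk_between_def walk_iff_successively)
qed

lemma gdist_sym:
  assumes "simple_graph V E" "connected_graph V E" "x \<in> V" "y \<in> V"
  shows "gdist V E x y = gdist V E y x"
proof -
  have "gdist V E y x \<le> gdist V E x y" if xy: "x \<in> V" "y \<in> V" for x y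
  proof -
    obtain xs where g: "geodesic V E x y xs" using geodesic_exists[OF assms(2) xy] .
    then have "walk_between V E y x (rev xs)"
      using walk_between_rev[OF assms(1)] by (auto simp: geodesic_def)
    from gdist_le_walk_length[OF this] show ?thesis using g by (simp add: geodesic_def)
  qed
  then show ?thesis using assms by (meson antisym)
qed

lemma walk_between_take:
  assumes "walk V E xs" "i < length xs"
  shows "walk_between V E (hd xs) (xs ! i) (take (Suc i) xs)"
proof -
  have "successively E (take (Suc i) xs)"
    using assms(1) unfolding walk_iff_successively
    by (metis append_take_drop_id successively_append_iff)
  moreover have "set (take (Suc i) xs) \<subseteq> V"
    using assms(1) by (meson order_trans set_take_subset walk_iff_successively)
  moreover have "last (take (Suc i) xs) = xs ! i"
    using assms(2) by (simp add: take_Suc_conv_app_nth)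
  moreover have "hd (take (Suc i) xs) = hd xs" using assms by (cases xs) auto
  ultimately show ?thesis using assms(2) by (auto simp: walk_between_def walk_iff_successively)
qed

lemma walk_between_drop:
  assumes "walk V E xs" "i < length xs"
  shows "walk_between V E (xs ! i) (last xs) (drop i xs)"
  using assms unfolding walk_between_def walk_def
  by (auto simp: hd_drop_conv_nth dest: in_set_dropD)

lemma gdist_split_geodesic:
  assumes "geodesic V E y z xs" "x \<in> set xs"
  shows "gdist V E y x + gdist V E x z \<le> gdist V E y z"
proof -
  obtain i where i: "i < length xs" "xs ! i = x" using assms(2) by (metis in_set_conv_nth)
  have w: "walk V E xs" "hd xs = y" "last xs = z"
    using assms(1) by (auto simp: geodesic_def walk_between_def)
  have "gdist V E y x \<le> i"
    using gdist_le_walk_length[OF walk_between_take[OF w(1) i(1)]] i w by simp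
  moreover have "gdist V E x z \<le> length xs - 1 - i"
    using gdist_le_walk_length[OF walk_between_drop[OF w(1) i(1)]] i w by simp
  moreover have "length xs = Suc (gdist V E y z)" using assms(1) by (simp add: geodesic_def)
  ultimately show ?thesis using i by linarith
qed

lemma geodesic_distinct:
  assumes "geodesic V E y z xs"
  shows "distinct xs"
proof (rule ccontr)
  assume "\<not> distinct xs"
  then obtain a w b c where xs: "xs = a @ [w] @ b @ [w] @ c" using not_distinct_decomp by blast
  have wb: "walk_between V E y z xs" and len: "length xs = Suc (gdist V E y z)"
    using assms by (auto simp: geodesic_def)
  have "successively E ((a @ [w]) @ (b @ [w]) @ c)"
    using wb unfolding xs walk_between_def walk_iff_successively by simp
  then have "successively E (a @ [w])" "successively E ([w] @ c)"
    by (metis append_assoc successively_append_iff)+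
  then have "successively E ((a @ [w]) @ c)"
    unfolding successively_append_iff by (cases c) auto
  moreover have "hd (a @ [w] @ c) = y" "last (a @ [w] @ c) = z"
    using wb unfolding xs walk_between_def by (cases a; simp; cases c; simp)+
  ultimately have "walk_between V E y z (a @ [w] @ c)"
    using wb unfolding xs walk_between_def walk_iff_successively by auto
  from gdist_le_walk_length[OF this] len xs show False by simp
qed

lemma on_geodesic_endpoint:
  assumes "connected_graph V E" "x \<in> V" "y \<in> V"
  shows "on_geodesic V E y x y"
proof -
  obtain xs where "geodesic V E x y xs" using geodesic_exists[OF assms] .
  then show ?thesis unfolding on_geodesic_def
    by (metis geodesic_def walk_between_def walk_iff_successively last_in_set)
qed

section \<open>Strong resolving sets\<close>

lemma strong_resolving_setI:
  assumes "connected_graph V E" "S \<subseteq> V"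
    and "\<And>x y. x \<in> V \<Longrightarrow> y \<in> V \<Longrightarrow> x \<noteq> y \<Longrightarrow> x \<notin> S \<Longrightarrow> y \<notin> S \<Longrightarrow>
            \<exists>z\<in>S. on_geodesic V E x y z \<or> on_geodesic V E y x z"
  shows "strong_resolving_set V E S"
  unfolding strong_resolving_set_def
proof (intro conjI assms(2) ballI impI)
  fix x y assume xy: "x \<in> V" "y \<in> V" "x \<noteq> y"
  show "\<exists>z\<in>S. on_geodesic V E x y z \<or> on_geodesic V E y x z"
    using assms(3)[OF xy] on_geodesic_endpoint[OF assms(1) xy(1,2)]
      on_geodesic_endpoint[OF assms(1) xy(2,1)] by blast
qed

definition mutually_maximally_distant :: "'a set \<Rightarrow> ('a \<Rightarrow> 'a \<Rightarrow> bool) \<Rightarrow> 'a \<Rightarrow> 'a \<Rightarrow> bool" where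
  "mutually_maximally_distant V E x y \<longleftrightarrow>
     (\<forall>z\<in>V. gdist V E y z \<le> gdist V E y x \<and> gdist V E x z \<le> gdist V E x y)"

text \<open>A geodesic through one of two mutually maximally distant vertices cannot be extended
  beyond the other one, so no third vertex strongly resolves them.\<close>
lemma mutually_maximally_distant_not_resolved:
  assumes c: "connected_graph V E" and xy: "x \<in> V" "y \<in> V" "x \<noteq> y"
    and mmd: "mutually_maximally_distant V E x y" and S: "x \<notin> S" "y \<notin> S"
  shows "\<not> strong_resolving_set V E S"
proof
  assume sr: "strong_resolving_set V E S"
  then obtain z where z: "z \<in> S" "on_geodesic V E x y z \<or> on_geodesic V E y x z"
    using xy unfolding strong_resolving_set_def by blast
  have zV: "z \<in> V" using sr z(1) by (auto simp: strong_resolving_set_def)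
  have "gdist V E x z \<ge> 1" "gdist V E y z \<ge> 1"
    using gdist_pos[OF c _ zV] xy z(1) S by auto
  moreover have "gdist V E y z \<le> gdist V E y x" "gdist V E x z \<le> gdist V E x y"
    using mmd zV unfolding mutually_maximally_distant_def by auto
  moreover have "gdist V E y x + gdist V E x z \<le> gdist V E y z \<or>
                 gdist V E x y + gdist V E y z \<le> gdist V E x z"
    using z(2) gdist_split_geodesic unfolding on_geodesic_def by metis
  ultimately show False by linarith
qed

lemma diametral_mutually_maximally_distant:
  assumes "simple_graph V E" "connected_graph V E" "x \<in> V" "y \<in> V"
    and "\<And>u v. u \<in> V \<Longrightarrow> v \<in> V \<Longrightarrow> gdist V E u v \<le> gdist V E x y"
  shows "mutually_maximally_distant V E x y"
  unfolding mutually_maximally_distant_def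
proof
  fix z assume "z \<in> V"
  then show "gdist V E y z \<le> gdist V E y x \<and> gdist V E x z \<le> gdist V E x y"
    using assms(3-5) gdist_sym[OF assms(1-4)] by metis
qed

lemma universal_mutually_maximally_distant:
  assumes c: "connected_graph V E" and xy: "x \<in> V" "y \<in> V" "x \<noteq> y"
    and univ: "\<And>u z. u \<in> {x, y} \<Longrightarrow> z \<in> V \<Longrightarrow> z \<noteq> u \<Longrightarrow> E u z"
  shows "mutually_maximally_distant V E x y"
  unfolding mutually_maximally_distant_def
proof
  fix z assume z: "z \<in> V"
  have "gdist V E u z \<le> 1" if u: "u \<in> {x, y}" for u
  proof (cases "z = u")
    case True then show ?thesis using gdist_refl[of z V E] z by simp
  next
    case False
    have "u \<in> V" using u xy by auto
    then show ?thesis using gdist_adjacent[of E u z V] univ[OF u z False] z by blast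
  qed
  then have "gdist V E y z \<le> 1" "gdist V E x z \<le> 1" by simp_all
  moreover have "gdist V E y x \<ge> 1" "gdist V E x y \<ge> 1" using gdist_pos[OF c] xy by auto
  ultimately show "gdist V E y z \<le> gdist V E y x \<and> gdist V E x z \<le> gdist V E x y"
    by linarith
qed

lemma leaf_not_inner_on_geodesic:
  assumes sg: "simple_graph V E" and deg: "degree V E x = 1"
    and og: "on_geodesic V E x y z" and ne: "x \<noteq> y" "x \<noteq> z"
  shows False
proof -
  obtain xs where g: "geodesic V E y z xs" "x \<in> set xs" using og unfolding on_geodesic_def by blast
  have d: "distinct xs" using geodesic_distinct[OF g(1)] .
  have w: "walk V E xs" "hd xs = y" "last xs = z"
    using g(1) by (auto simp: geodesic_def walk_between_def)
  obtain i where i: "i < length xs" "xs ! i = x" using g(2) by (metis in_set_conv_nth)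
  have i0: "i \<noteq> 0" using i w ne by (metis hd_conv_nth walk_def)
  have il: "Suc i < length xs" using i w ne by (metis Suc_lessI diff_Suc_1 last_conv_nth walk_def)
  have "E (xs ! (i - 1)) x" "E x (xs ! Suc i)"
    using w(1) i i0 il unfolding walk_def by (metis Suc_pred' gr0I less_imp_diff_less)+
  then have "{xs ! (i - 1), xs ! Suc i} \<subseteq> {u \<in> V. E x u}"
    using sg by (auto simp: simple_graph_def)
  moreover have "xs ! (i - 1) \<noteq> xs ! Suc i" using d il i0 by (simp add: nth_eq_iff_index_eq)
  moreover have "finite {u \<in> V. E x u}" using sg by (simp add: simple_graph_def)
  ultimately have "2 \<le> degree V E x" unfolding degree_def by (metis card_2_iff card_mono)
  then show False using deg by simp
qed

section \<open>Maker-Breaker games\<close>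

definition blocking_pair :: "'a set \<Rightarrow> ('a set \<Rightarrow> bool) \<Rightarrow> 'a \<Rightarrow> 'a \<Rightarrow> bool" where
  "blocking_pair V W x y \<longleftrightarrow> (\<forall>M \<subseteq> V. x \<notin> M \<longrightarrow> y \<notin> M \<longrightarrow> \<not> W M)"

lemma card_free_insert_less:
  assumes "finite V" "v \<in> V - (M \<union> B)"
  shows "card (V - (insert v M \<union> B)) < card (V - (M \<union> B))"
    and "card (V - (M \<union> insert v B)) < card (V - (M \<union> B))"
proof -
  have "V - (insert v M \<union> B) = V - (M \<union> B) - {v}" "V - (M \<union> insert v B) = V - (M \<union> B) - {v}"
    by blast+
  then show "card (V - (insert v M \<union> B)) < card (V - (M \<union> B))"
    and "card (V - (M \<union> insert v B)) < card (V - (M \<union> B))"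
    using card_Diff1_less[of "V - (M \<union> B)" v] assms by simp_all
qed

lemma breaker_wins_if_owns_blocking_pair:
  assumes "finite V" "M \<inter> B = {}" "M \<union> B \<subseteq> V" "x \<in> B" "y \<in> B" "blocking_pair V W x y"
  shows "breaker_wins V W M B t"
  using assms(2-)
proof (induction "card (V - (M \<union> B))" arbitrary: M B t rule: less_induct)
  case (less M B t)
  show ?case
  proof (cases "V - (M \<union> B) = {}")
    case True
    have "\<not> W M" using less.prems unfolding blocking_pair_def by blast
    then show ?thesis by (rule bw_end[OF True])
  next
    case free: False
    note card_free = card_free_insert_less[OF assms(1)]
    show ?thesis
    proof (cases t)
      case True
      have "breaker_wins V W (insert v M) B False" if "v \<in> V - (M \<union> B)" for v
        using less.prems that by (intro less.hyps card_free) auto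
      then have "breaker_wins V W M B True" using free by (intro bw_maker) auto
      then show ?thesis using True by simp
    next
      case False
      obtain v where v: "v \<in> V - (M \<union> B)" using free by blast
      then have "breaker_wins V W M (insert v B) True"
        using less.prems by (intro less.hyps card_free) auto
      then have "breaker_wins V W M B False" using v by (intro bw_breaker[of v]) auto
      then show ?thesis using False by simp
    qed
  qed
qed

definition has_double_threat :: "'a set \<Rightarrow> ('a set \<Rightarrow> bool) \<Rightarrow> 'a set \<Rightarrow> bool" where
  "has_double_threat V W F \<longleftrightarrow>
     (\<exists>x y z. {x, y, z} \<subseteq> F \<and> distinct [x, y, z] \<and> blocking_pair V W x y \<and> blocking_pair V W x z)"

lemma has_double_threat_mono: "has_double_threat V W F \<Longrightarrow> F \<subseteq> F' \<Longrightarrow> has_double_threat V W F'"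
  unfolding has_double_threat_def by blast

text \<open>Breaker claims \<open>x\<close>; whichever of \<open>y\<close>, \<open>z\<close> Maker answers with, Breaker takes the
  other one and owns a blocking pair.\<close>
lemma breaker_wins_double_threat:
  assumes fin: "finite V" and MB: "M \<inter> B = {}" "M \<union> B \<subseteq> V"
    and threat: "has_double_threat V W (V - (M \<union> B))"
  shows "breaker_wins V W M B False"
proof -
  obtain x y z where xyz: "{x, y, z} \<subseteq> V - (M \<union> B)" "distinct [x, y, z]"
    and b: "blocking_pair V W x y" "blocking_pair V W x z"
    using threat unfolding has_double_threat_def by blast
  have "breaker_wins V W (insert v M) (insert x B) False" if v: "v \<in> V - (M \<union> insert x B)" for v
  proof -
    obtain w where w: "w \<in> {y, z} - {v}" "blocking_pair V W x w" using b xyz by auto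
    have "breaker_wins V W (insert v M) (insert w (insert x B)) True"
      using MB xyz v w by (intro breaker_wins_if_owns_blocking_pair[OF fin _ _ _ _ w(2)]) auto
    then show ?thesis using xyz v w by (intro bw_breaker[of w]) auto
  qed
  then have "breaker_wins V W M (insert x B) True" using xyz by (intro bw_maker) auto
  then show ?thesis using xyz by (intro bw_breaker[of x]) auto
qed

lemma breaker_wins_double_threat_after_move:
  assumes fin: "finite V" and MB: "M \<inter> B = {}" "M \<union> B \<subseteq> V" "V - (M \<union> B) \<noteq> {}"
    and threat: "\<And>v. v \<in> V - (M \<union> B) \<Longrightarrow> has_double_threat V W (V - (M \<union> B) - {v})"
  shows "breaker_wins V W M B True"
proof (rule bw_maker[OF MB(3)], rule ballI)
  fix v assume v: "v \<in> V - (M \<union> B)"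
  have "V - (insert v M \<union> B) = V - (M \<union> B) - {v}" by blast
  then show "breaker_wins V W (insert v M) B False"
    using MB v threat[OF v] by (intro breaker_wins_double_threat[OF fin]) auto
qed

lemma blocking_clique_double_threat:
  assumes "card C \<ge> 3" "pairwise (blocking_pair V W) C"
  shows "has_double_threat V W C"
proof -
  obtain T where "T \<subseteq> C" "card T = 3" using assms(1) obtain_subset_with_card_n by metis
  then show ?thesis
    using assms(2) unfolding has_double_threat_def card_3_iff pairwise_def by (auto 0 4)
qed

lemma breaker_first_wins_if_blocking_clique:
  assumes fin: "finite V" and C: "C \<subseteq> V" "card C \<ge> 3" "pairwise (blocking_pair V W) C"
  shows "breaker_wins V W {} {} False"
  using C blocking_clique_double_threat[OF C(2,3)]
  by (intro breaker_wins_double_threat[OF fin]) (auto elim: has_double_threat_mono)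

lemma breaker_second_wins_if_blocking_clique_4:
  assumes fin: "finite V" and C: "C \<subseteq> V" "card C \<ge> 4" "pairwise (blocking_pair V W) C"
  shows "breaker_wins V W {} {} True"
proof (rule breaker_wins_double_threat_after_move[OF fin])
  fix v
  have "card (C - {v}) \<ge> 3" using C(2) by (auto simp: card_Diff_singleton_if)
  moreover have "pairwise (blocking_pair V W) (C - {v})" using C(3) by (rule pairwise_subset) blast
  ultimately show "has_double_threat V W (V - ({} \<union> {}) - {v})"
    using C(1) by (auto intro: has_double_threat_mono blocking_clique_double_threat)
qed (use C in auto)

lemma breaker_second_wins_if_two_blocking_cliques:
  assumes fin: "finite V"
    and C: "C \<subseteq> V" "card C \<ge> 3" "pairwise (blocking_pair V W) C"
    and D: "D \<subseteq> V" "card D \<ge> 3" "pairwise (blocking_pair V W) D" and "disjnt C D"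
  shows "breaker_wins V W {} {} True"
proof (rule breaker_wins_double_threat_after_move[OF fin])
  fix v
  obtain K where "K \<in> {C, D}" "v \<notin> K" using \<open>disjnt C D\<close> by (auto simp: disjnt_iff)
  then show "has_double_threat V W (V - ({} \<union> {}) - {v})"
    using C D by (auto intro: has_double_threat_mono[OF blocking_clique_double_threat])
qed (use C in auto)

text \<open>The invariant of Maker's pairing strategy.\<close>
definition pairs_answered :: "'a set set \<Rightarrow> 'a set \<Rightarrow> 'a set \<Rightarrow> bool" where
  "pairs_answered P M B \<longleftrightarrow> (\<forall>p\<in>P. p \<inter> M \<noteq> {} \<or> p \<inter> B = {})"

lemma pairs_answered_mono: "pairs_answered P M B \<Longrightarrow> B' \<subseteq> B \<Longrightarrow> pairs_answered P M B'"
  unfolding pairs_answered_def by blast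

lemma pairs_answered_hit:
  assumes "pairs_answered P M (B - {b})" "p \<in> P" "card p = 2" "p \<subseteq> M \<union> B"
  shows "p \<inter> M \<noteq> {}"
proof
  assume "p \<inter> M = {}"
  then have "p \<inter> (B - {b}) = {}" "p \<subseteq> B" using assms unfolding pairs_answered_def by blast+
  then have "card p \<le> card {b}" by (intro card_mono) blast+
  then show False using assms(3) by simp
qed

text \<open>Maker's reply to Breaker's last move \<open>b\<close>: the partner of \<open>b\<close> if its pair is still open,
  an arbitrary free vertex otherwise.\<close>
lemma pairs_answered_reply:
  assumes P: "\<forall>p\<in>P. p \<subseteq> V \<and> card p = 2" "pairwise disjnt P"
    and ans: "pairs_answered P M (B - {b})" and free: "V - (M \<union> B) \<noteq> {}"
  obtains w where "w \<in> V - (M \<union> B)" "pairs_answered P (insert w M) B"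
proof (cases "\<exists>p\<in>P. b \<in> p \<and> p \<inter> M = {}")
  case True
  then obtain p where p: "p \<in> P" "b \<in> p" "p \<inter> M = {}" by blast
  have "card p = 2" using P(1) p(1) by blast
  then obtain u v where uv: "p = {u, v}" "u \<noteq> v" unfolding card_2_iff by blast
  define w where "w = (if b = u then v else u)"
  have w: "p = {b, w}" "w \<noteq> b" using uv p(2) unfolding w_def by auto
  have "p \<inter> (B - {b}) = {}" using ans p unfolding pairs_answered_def by blast
  then have "w \<in> V - (M \<union> B)" using p w P(1) by auto
  moreover have "pairs_answered P (insert w M) B"
    unfolding pairs_answered_def
  proof
    fix q assume q: "q \<in> P"
    show "q \<inter> insert w M \<noteq> {} \<or> q \<inter> B = {}"
    proof (cases "q = p")
      case False
      then have "b \<notin> q" using P(2) p q by (auto simp: pairwise_def disjnt_iff)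
      then show ?thesis using ans q unfolding pairs_answered_def by blast
    qed (use w in auto)
  qed
  ultimately show ?thesis by (rule that)
next
  case False
  obtain w where "w \<in> V - (M \<union> B)" using free by blast
  moreover have "pairs_answered P (insert w M) B"
    unfolding pairs_answered_def
  proof
    fix q assume "q \<in> P"
    then have "q \<inter> M \<noteq> {} \<or> b \<notin> q" "q \<inter> M \<noteq> {} \<or> q \<inter> (B - {b}) = {}"
      using ans False unfolding pairs_answered_def by auto
    then show "q \<inter> insert w M \<noteq> {} \<or> q \<inter> B = {}" by auto
  qed
  ultimately show ?thesis by (rule that)
qed

lemma maker_wins_by_pairing:
  assumes fin: "finite V" and P: "\<forall>p\<in>P. p \<subseteq> V \<and> card p = 2" "pairwise disjnt P"
    and win: "\<And>M'. M0 \<subseteq> M' \<Longrightarrow> M' \<subseteq> V \<Longrightarrow> \<forall>p\<in>P. p \<inter> M' \<noteq> {} \<Longrightarrow> W M'"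
    and pos: "M0 \<subseteq> M" "M \<union> B \<subseteq> V"
    and inv: "if t then \<exists>b. pairs_answered P M (B - {b}) else pairs_answered P M B"
  shows "maker_wins V W M B t"
  using pos inv
proof (induction "card (V - (M \<union> B))" arbitrary: M B t rule: less_induct)
  case (less M B t)
  obtain b where ans: "pairs_answered P M (B - {b})"
  proof (cases t)
    case False
    then have "pairs_answered P M (B - {undefined})"
      using less.prems(3) pairs_answered_mono[of P M B] by auto
    then show ?thesis by (rule that)
  qed (use less.prems(3) that in auto)
  note card_free = card_free_insert_less[OF fin]
  show ?case
  proof (cases "V - (M \<union> B) = {}")
    case True
    then have "\<forall>p\<in>P. p \<inter> M \<noteq> {}" using pairs_answered_hit[OF ans] P(1) by blast
    then have "W M" using win less.prems by blast
    with True show ?thesis by (rule mw_end)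
  next
    case free: False
    show ?thesis
    proof (cases t)
      case False
      have "maker_wins V W M (insert v B) True" if v: "v \<in> V - (M \<union> B)" for v
      proof (rule less.hyps)
        have "pairs_answered P M (insert v B - {v})"
          by (rule pairs_answered_mono[of P M B]) (use less.prems(3) False in auto)
        then show "if True then \<exists>b. pairs_answered P M (insert v B - {b}) else pairs_answered P M (insert v B)"
          by (simp only: if_True) (rule exI)
      qed (use less.prems v card_free in auto)
      then have "maker_wins V W M B False" using free by (intro mw_breaker) auto
      then show ?thesis using False by simp
    next
      case True
      obtain w where w: "w \<in> V - (M \<union> B)" "pairs_answered P (insert w M) B"
        using pairs_answered_reply[OF P ans free] .
      have "maker_wins V W (insert w M) B False"
        using less.prems w card_free by (intro less.hyps) auto
      then have "maker_wins V W M B True" using w by (intro mw_maker[of w]) auto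
      then show ?thesis using True by simp
    qed
  qed
qed

text \<open>Maker plays the pairing strategy on the groups that still have two unclaimed vertices.\<close>
lemma maker_wins_group_game:
  assumes fin: "finite V" and Gs: "\<forall>g\<in>Gs. g \<subseteq> V" "pairwise disjnt Gs"
    and win: "\<And>M. M \<subseteq> V \<Longrightarrow> \<forall>g\<in>Gs. card (g - M) \<le> 1 \<Longrightarrow> W M"
    and M0: "M0 \<subseteq> V" "\<forall>g\<in>Gs. card (g - M0) \<le> 2"
  shows "maker_wins V W M0 {} t"
proof -
  define P where "P = (\<lambda>g. g - M0) ` {g\<in>Gs. card (g - M0) = 2}"
  have "pairwise disjnt P"
    using Gs(2) unfolding P_def pairwise_image by (auto simp: pairwise_def disjnt_def)
  moreover have "\<forall>p\<in>P. p \<subseteq> V \<and> card p = 2" using Gs(1) unfolding P_def by auto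
  moreover have "W M" if M: "M0 \<subseteq> M" "M \<subseteq> V" "\<forall>p\<in>P. p \<inter> M \<noteq> {}" for M
  proof (rule win[OF M(2)], rule ballI)
    fix g assume g: "g \<in> Gs"
    have fg: "finite (g - M0)" using fin Gs(1) g finite_subset by blast
    have sub: "g - M \<subseteq> g - M0" using M(1) by blast
    show "card (g - M) \<le> 1"
    proof (cases "card (g - M0) = 2")
      case True
      then obtain v where "v \<in> g - M0" "v \<in> M" using M(3) g unfolding P_def by blast
      then have "g - M \<subseteq> g - M0 - {v}" using sub by blast
      then have "card (g - M) \<le> card (g - M0 - {v})" using fg by (intro card_mono) auto
      then show ?thesis using True \<open>v \<in> g - M0\<close> by simp
    next
      case False
      then show ?thesis using M0(2) g card_mono[OF fg sub] by fastforce
    qed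
  qed
  ultimately show ?thesis
    using M0(1) by (intro maker_wins_by_pairing[OF fin, of P M0]) (auto simp: pairs_answered_def)
qed

section \<open>The strong resolving game\<close>

lemma O_SR_is_Out_M_iff:
  "O_SR_is V E Out_M \<longleftrightarrow> maker_wins V (SR_win V E) {} {} True \<and> maker_wins V (SR_win V E) {} {} False"
  by (simp add: O_SR_is_def maker_wins_M_game_def maker_wins_B_game_def)

lemma O_SR_is_Out_N_iff:
  "O_SR_is V E Out_N \<longleftrightarrow> maker_wins V (SR_win V E) {} {} True \<and> breaker_wins V (SR_win V E) {} {} False"
  by (simp add: O_SR_is_def maker_wins_M_game_def breaker_wins_B_game_def)

lemma O_SR_is_Out_B_iff:
  "O_SR_is V E Out_B \<longleftrightarrow> breaker_wins V (SR_win V E) {} {} True \<and> breaker_wins V (SR_win V E) {} {} False"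
  by (simp add: O_SR_is_def breaker_wins_M_game_def breaker_wins_B_game_def)

lemma blocking_pair_SR_win_iff:
  "blocking_pair V (SR_win V E) x y \<longleftrightarrow> (\<forall>S. x \<notin> S \<longrightarrow> y \<notin> S \<longrightarrow> \<not> strong_resolving_set V E S)"
proof -
  have "S \<subseteq> V" if "strong_resolving_set V E S" for S
    using that by (simp add: strong_resolving_set_def)
  then show ?thesis unfolding blocking_pair_def SR_win_def by (meson subset_iff subset_refl)
qed

lemma mutually_maximally_distant_blocking:
  assumes "connected_graph V E" "x \<in> V" "y \<in> V" "x \<noteq> y" "mutually_maximally_distant V E x y"
  shows "blocking_pair V (SR_win V E) x y"
  using mutually_maximally_distant_not_resolved[OF assms] by (simp add: blocking_pair_SR_win_iff)

definition resolving_groups :: "'a set \<Rightarrow> ('a \<Rightarrow> 'a \<Rightarrow> bool) \<Rightarrow> 'a set set \<Rightarrow> bool" where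
  "resolving_groups V E Gs \<longleftrightarrow> (\<forall>g\<in>Gs. g \<subseteq> V) \<and> pairwise disjnt Gs \<and>
     (\<forall>S \<subseteq> V. (\<forall>g\<in>Gs. card (g - S) \<le> 1) \<longrightarrow> strong_resolving_set V E S)"

lemma maker_wins_if_resolving_groups:
  assumes "finite V" "resolving_groups V E Gs" "M0 \<subseteq> V" "\<forall>g\<in>Gs. card (g - M0) \<le> 2"
  shows "maker_wins V (SR_win V E) M0 {} t"
  using assms unfolding resolving_groups_def
  by (intro maker_wins_group_game) (auto simp: SR_win_def)

lemma O_SR_is_Out_M_if_resolving_pairs:
  assumes "finite V" "resolving_groups V E Gs" "\<forall>g\<in>Gs. card g \<le> 2"
  shows "O_SR_is V E Out_M"
  using assms by (simp add: O_SR_is_Out_M_iff maker_wins_if_resolving_groups)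

lemma O_SR_is_Out_N_if_resolving_triple:
  assumes fin: "finite V" and Gs: "resolving_groups V E Gs"
    and g0: "g0 \<in> Gs" "card g0 = 3" "pairwise (blocking_pair V (SR_win V E)) g0"
    and small: "\<forall>g\<in>Gs - {g0}. card g \<le> 2"
  shows "O_SR_is V E Out_N"
proof -
  have g0V: "g0 \<subseteq> V" using Gs g0(1) by (simp add: resolving_groups_def)
  obtain e where e: "e \<in> g0" using g0(2) by fastforce
  have "card (g - {e}) \<le> 2" if g: "g \<in> Gs" for g
  proof (cases "g = g0")
    case True then show ?thesis using g0(2) e by simp
  next
    case False
    then have "card g \<le> 2" using small g by blast
    then show ?thesis using card_Diff1_le[of g e] by linarith
  qed
  then have "maker_wins V (SR_win V E) {e} {} False"
    using e g0V by (intro maker_wins_if_resolving_groups[OF fin Gs]) auto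
  then have "maker_wins V (SR_win V E) {} {} True" using e g0V by (intro mw_maker[of e]) auto
  moreover have "breaker_wins V (SR_win V E) {} {} False"
    using g0 g0V by (intro breaker_first_wins_if_blocking_clique[OF fin]) auto
  ultimately show ?thesis by (simp add: O_SR_is_Out_N_iff)
qed

lemma O_SR_is_Out_B_if_blocking_clique_4:
  assumes "finite V" "C \<subseteq> V" "card C \<ge> 4" "pairwise (blocking_pair V (SR_win V E)) C"
  shows "O_SR_is V E Out_B"
  using assms breaker_second_wins_if_blocking_clique_4 breaker_first_wins_if_blocking_clique[of V C]
  by (simp add: O_SR_is_Out_B_iff)

lemma O_SR_is_Out_B_if_two_blocking_cliques:
  assumes "finite V" "C \<subseteq> V" "card C \<ge> 3" "pairwise (blocking_pair V (SR_win V E)) C"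
    "D \<subseteq> V" "card D \<ge> 3" "pairwise (blocking_pair V (SR_win V E)) D" "disjnt C D"
  shows "O_SR_is V E Out_B"
  using breaker_second_wins_if_two_blocking_cliques[OF assms] breaker_first_wins_if_blocking_clique[OF assms(1-4)]
  by (simp add: O_SR_is_Out_B_iff)

section \<open>Trees\<close>

lemma distinct_hd_eq_last:
  assumes "distinct xs" "xs \<noteq> []" "hd xs = last xs"
  shows "xs = [hd xs]"
proof (cases xs)
  case (Cons a ys)
  then show ?thesis using assms last_in_set[of ys] by (cases "ys = []") auto
qed (use assms in simp)

text \<open>Two paths leaving \<open>u\<close> through different neighbours and meeting again close a cycle:
  follow the first one up to its first vertex \<open>w\<close> on the second one, and return along the
  second one.\<close>
lemma has_cycle_if_paths_diverge:
  assumes sg: "simple_graph V E"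
    and P: "walk V E (u # P)" "distinct (u # P)" and Q: "walk V E (u # Q)" "distinct (u # Q)"
    and meet: "set P \<inter> set Q \<noteq> {}" and diverge: "hd P \<noteq> hd Q"
  shows "has_cycle V E"
proof -
  obtain A w B where PA: "P = A @ w # B" "w \<in> set Q" "\<forall>y\<in>set A. y \<notin> set Q"
    using meet split_list_first_prop[of P "\<lambda>x. x \<in> set Q"] by blast
  obtain C D where QC: "Q = C @ w # D" using PA(2) split_list by metis
  have sym: "E a b \<Longrightarrow> E b a" for a b using sg by (simp add: simple_graph_def)
  define cyc where "cyc = (u # A @ [w]) @ rev C"
  have "successively E ((u # A @ [w]) @ B)"
    using P(1) PA(1) by (simp add: walk_iff_successively)
  then have s1: "successively E (u # A @ [w])"
    by (rule successively_append_iff[THEN iffD1, THEN conjunct1])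
  have "successively E ((u # C @ [w]) @ D)"
    using Q(1) QC by (simp add: walk_iff_successively)
  then have su: "successively E (u # C @ [w])"
    by (rule successively_append_iff[THEN iffD1, THEN conjunct1])
  then have "successively E (C @ [w])" by (simp add: successively_Cons)
  then have "successively (\<lambda>a b. E b a) (C @ [w])" by (rule successively_mono) (rule sym)
  then have "successively E (rev (C @ [w]))" by (simp only: successively_rev)
  then have "successively E cyc"
    using s1 unfolding cyc_def successively_append_iff by (cases C rule: rev_cases) auto
  moreover have "E (last cyc) (hd cyc)"
    using su sym unfolding cyc_def by (cases C) (auto simp: last_rev successively_Cons)
  moreover have "A \<noteq> [] \<or> C \<noteq> []" using diverge PA QC by auto
  then have "length cyc \<ge> 3" unfolding cyc_def by (auto simp: Suc_le_eq)
  moreover have "distinct cyc" unfolding cyc_def using P(2) Q(2) PA QC by auto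
  moreover have "set cyc \<subseteq> V"
    using P(1) Q(1) PA QC unfolding cyc_def walk_iff_successively by auto
  ultimately show ?thesis unfolding has_cycle_def walk_iff_successively
    by (intro exI[of _ cyc]) (auto simp: cyc_def)
qed

lemma tree_path_unique:
  assumes sg: "simple_graph V E" and nc: "\<not> has_cycle V E"
  shows "walk V E P \<Longrightarrow> distinct P \<Longrightarrow> walk V E Q \<Longrightarrow> distinct Q \<Longrightarrow>
    hd P = hd Q \<Longrightarrow> last P = last Q \<Longrightarrow> P = Q"
proof (induction P arbitrary: Q)
  case Nil then show ?case by (simp add: walk_iff_successively)
next
  case (Cons u P)
  obtain Q' where Q: "Q = u # Q'"
    using Cons.prems(3,5) by (cases Q) (auto simp: walk_iff_successively)
  show ?case
  proof (cases "P = [] \<or> Q' = []")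
    case True
    then have "hd (u # P) = last (u # P)" "hd Q = last Q" using Cons.prems(5,6) Q by auto
    then show ?thesis
      using distinct_hd_eq_last[of "u # P"] distinct_hd_eq_last[of Q] Cons.prems(2,4) Q by auto
  next
    case False
    have PQ': "walk V E P" "distinct P" "walk V E Q'" "distinct Q'" "last P = last Q'"
      using Cons.prems False Q by (auto simp: walk_iff_successively successively_Cons)
    show ?thesis
    proof (cases "hd P = hd Q'")
      case True then show ?thesis using Cons.IH PQ' Q by simp
    next
      case False
      have "set P \<inter> set Q' \<noteq> {}" using PQ'(5) \<open>\<not> (P = [] \<or> Q' = [])\<close> last_in_set by fastforce
      then have "has_cycle V E"
        using has_cycle_if_paths_diverge[OF sg, of u P Q'] Cons.prems Q False by simp
      with nc show ?thesis by simp
    qed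
  qed
qed

lemma tree_path_geodesic:
  assumes t: "is_tree V E" and P: "walk V E P" "distinct P"
  shows "geodesic V E (hd P) (last P) P"
proof -
  have sg: "simple_graph V E" and c: "connected_graph V E" and nc: "\<not> has_cycle V E"
    using t by (auto simp: is_tree_def)
  have "hd P \<in> V" "last P \<in> V" using P by (auto simp: walk_iff_successively)
  then obtain G where G: "geodesic V E (hd P) (last P) G" using geodesic_exists[OF c] by blast
  then have "walk V E G" "hd G = hd P" "last G = last P"
    by (auto simp: geodesic_def walk_between_def)
  then have "P = G" using tree_path_unique[OF sg nc P] geodesic_distinct[OF G] by simp
  then show ?thesis using G by simp
qed

lemma tree_on_geodesic_to_last:
  assumes t: "is_tree V E" and P: "walk V E P" "distinct P" and ij: "i \<le> j" "j < length P"
  shows "on_geodesic V E (P ! j) (P ! i) (last P)"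
proof -
  have "walk V E (drop i P)" using walk_between_drop[OF P(1)] ij by (auto simp: walk_between_def)
  then have "geodesic V E (hd (drop i P)) (last (drop i P)) (drop i P)"
    using P(2) by (intro tree_path_geodesic[OF t]) simp_all
  moreover have "hd (drop i P) = P ! i" "last (drop i P) = last P" using ij by (simp_all add: hd_drop_conv_nth)
  moreover have "drop i P ! (j - i) = P ! j" "j - i < length (drop i P)" using ij by simp_all
  then have "P ! j \<in> set (drop i P)" by (metis nth_mem)
  ultimately show ?thesis unfolding on_geodesic_def by auto
qed

lemma tree_path_resolves_by_last:
  assumes t: "is_tree V E" and P: "walk V E P" "distinct P" "x \<in> set P" "y \<in> set P"
  shows "on_geodesic V E x y (last P) \<or> on_geodesic V E y x (last P)"
proof -
  obtain i j where "i < length P" "P ! i = x" "j < length P" "P ! j = y"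
    using P(3,4) by (metis in_set_conv_nth)
  then show ?thesis using tree_on_geodesic_to_last[OF t P(1,2)] by (cases "i \<le> j") auto
qed

definition paths_through :: "'a set \<Rightarrow> ('a \<Rightarrow> 'a \<Rightarrow> bool) \<Rightarrow> 'a \<Rightarrow> 'a \<Rightarrow> 'a list set" where
  "paths_through V E x y = {P. walk V E P \<and> distinct P \<and> x \<in> set P \<and> y \<in> set P}"

lemma paths_through_rev:
  assumes "simple_graph V E" "P \<in> paths_through V E x y"
  shows "rev P \<in> paths_through V E x y"
proof -
  have "successively (\<lambda>a b. E b a) P" using assms
    by (auto simp: paths_through_def walk_iff_successively simple_graph_def intro: successively_mono)
  then show ?thesis using assms(2) by (auto simp: paths_through_def walk_iff_successively)
qed

lemma longest_path_through_exists:
  assumes "finite V" "connected_graph V E" "x \<in> V" "y \<in> V"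
  obtains P where "P \<in> paths_through V E x y" "\<forall>Q\<in>paths_through V E x y. length Q \<le> length P"
proof -
  obtain G where G: "geodesic V E x y G" using geodesic_exists[OF assms(2-4)] .
  then have "G \<in> paths_through V E x y" using geodesic_distinct[OF G]
    by (auto simp: paths_through_def geodesic_def walk_between_def walk_iff_successively)
  moreover have "length Q < Suc (card V)" if "Q \<in> paths_through V E x y" for Q
  proof -
    have "distinct Q" "set Q \<subseteq> V" using that by (auto simp: paths_through_def walk_iff_successively)
    then have "length Q = card (set Q)" "card (set Q) \<le> card V"
      using card_mono[OF assms(1), of "set Q"] distinct_card[of Q] by simp_all
    then show ?thesis by linarith
  qed
  ultimately show ?thesis
    using that ex_has_greatest_nat[of "\<lambda>Q. Q \<in> paths_through V E x y" G length "Suc (card V)"] by blast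
qed

lemma has_cycle_if_chord_to_hd:
  assumes "walk V E P" "distinct P" "2 \<le> k" "k < length P" "E (P ! k) (hd P)"
  shows "has_cycle V E"
proof -
  have "walk V E (take (Suc k) P)"
    using walk_between_take[OF assms(1,4)] by (simp add: walk_between_def)
  moreover have "last (take (Suc k) P) = P ! k" using assms(4) by (simp add: take_Suc_conv_app_nth)
  moreover have "hd (take (Suc k) P) = hd P" using assms(4) by (cases P) simp_all
  ultimately show ?thesis unfolding has_cycle_def using assms
    by (intro exI[of _ "take (Suc k) P"]) simp
qed

lemma tree_longest_path_hd_leaf:
  assumes t: "is_tree V E" and P: "P \<in> paths_through V E x y"
    and longest: "\<forall>Q\<in>paths_through V E x y. length Q \<le> length P" and len: "length P \<ge> 2"
  shows "degree V E (hd P) = 1"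
proof -
  have sg: "simple_graph V E" and nc: "\<not> has_cycle V E" using t by (auto simp: is_tree_def)
  obtain a p R where PR: "P = a # p # R" using len by (cases P; cases "tl P") auto
  have wP: "walk V E P" "distinct P" "successively E P" "set P \<subseteq> V"
    using P by (auto simp: paths_through_def walk_iff_successively)
  have "u = p" if u: "u \<in> V" "E a u" for u
  proof (rule ccontr)
    assume "u \<noteq> p"
    show False
    proof (cases "u \<in> set P")
      case False
      then have "u # P \<in> paths_through V E x y"
        using P u wP(3) sg PR by (auto simp: paths_through_def walk_iff_successively simple_graph_def)
      then show False using longest by fastforce
    next
      case True
      then obtain k where k: "k < length P" "P ! k = u" by (metis in_set_conv_nth)
      have "k \<noteq> 0"
      proof
        assume "k = 0"
        then have "E a a" using k u PR by simp
        then show False using sg by (simp add: simple_graph_def)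
      qed
      moreover have "k \<noteq> 1" using k PR \<open>u \<noteq> p\<close> by auto
      moreover have "E (P ! k) (hd P)" using k u PR sg by (auto simp: simple_graph_def)
      ultimately show False using has_cycle_if_chord_to_hd[OF wP(1,2) _ k(1)] nc by simp
    qed
  qed
  then have "{u \<in> V. E a u} = {p}" using wP PR by auto
  then show ?thesis using PR by (simp add: degree_def)
qed

lemma tree_longest_path_ends:
  assumes t: "is_tree V E" and P: "P \<in> paths_through V E x y" and "x \<noteq> y"
    and longest: "\<forall>Q\<in>paths_through V E x y. length Q \<le> length P"
  shows "degree V E (hd P) = 1" "degree V E (last P) = 1" "hd P \<noteq> last P"
proof -
  have sg: "simple_graph V E" using t by (simp add: is_tree_def)
  have wP: "distinct P" "x \<in> set P" "y \<in> set P" using P by (auto simp: paths_through_def)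
  have "card {x, y} \<le> card (set P)" using wP by (intro card_mono) auto
  then have len: "length P \<ge> 2" using \<open>x \<noteq> y\<close> distinct_card[OF wP(1)] by simp
  show "degree V E (hd P) = 1" by (rule tree_longest_path_hd_leaf[OF t P longest len])
  show "degree V E (last P) = 1"
    using tree_longest_path_hd_leaf[OF t paths_through_rev[OF sg P]] longest len by (simp add: hd_rev)
  have "P \<noteq> []" using len by auto
  then have "hd P = P ! 0" "last P = P ! (length P - 1)" by (simp_all add: hd_conv_nth last_conv_nth)
  moreover have "P ! 0 \<noteq> P ! (length P - 1)"
    using \<open>P \<noteq> []\<close> len nth_eq_iff_index_eq[OF wP(1), of 0 "length P - 1"] by simp
  ultimately show "hd P \<noteq> last P" by simp
qed

text \<open>The two ends of a longest path through \<open>x\<close> and \<open>y\<close> are leaves, so one of them lies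
  in \<open>S\<close>, and in a tree the segment of the path leading to it is a geodesic.\<close>
lemma tree_resolving_if_leaves_almost_all:
  assumes t: "is_tree V E" and S: "S \<subseteq> V"
    and leaves: "card ({v \<in> V. degree V E v = 1} - S) \<le> 1"
  shows "strong_resolving_set V E S"
proof (rule strong_resolving_setI[OF _ S])
  show c: "connected_graph V E" using t by (simp add: is_tree_def)
  have sg: "simple_graph V E" using t by (simp add: is_tree_def)
  then have fin: "finite V" by (simp add: simple_graph_def)
  fix x y assume xy: "x \<in> V" "y \<in> V" "x \<noteq> y" "x \<notin> S" "y \<notin> S"
  obtain P where P: "P \<in> paths_through V E x y"
    and longest: "\<forall>Q\<in>paths_through V E x y. length Q \<le> length P"
    using longest_path_through_exists[OF fin c xy(1,2)] .
  have wP: "walk V E P" "distinct P" "x \<in> set P" "y \<in> set P" using P by (auto simp: paths_through_def)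
  have "hd P \<in> V" "last P \<in> V" using wP(1) by (auto simp: walk_iff_successively)
  then have "last P \<in> S \<or> hd P \<in> S"
    using tree_longest_path_ends[OF t P xy(3) longest] leaves fin by (auto simp: card_le_Suc0_iff_eq)
  then show "\<exists>z\<in>S. on_geodesic V E x y z \<or> on_geodesic V E y x z"
    using tree_path_resolves_by_last[OF t wP] paths_through_rev[OF sg P]
      tree_path_resolves_by_last[OF t, of "rev P" x y] by (auto simp: paths_through_def last_rev)
qed

lemma leaves_blocking_pair:
  assumes sg: "simple_graph V E" and xy: "x \<in> V" "y \<in> V" "x \<noteq> y"
    and leaves: "degree V E x = 1" "degree V E y = 1"
  shows "blocking_pair V (SR_win V E) x y"
  unfolding blocking_pair_SR_win_iff
proof (intro allI impI notI)
  fix S assume S: "x \<notin> S" "y \<notin> S" "strong_resolving_set V E S"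
  then obtain z where "z \<in> S" "on_geodesic V E x y z \<or> on_geodesic V E y x z"
    using xy unfolding strong_resolving_set_def by blast
  then show False using leaf_not_inner_on_geodesic[OF sg] leaves xy(3) S(1,2) by metis
qed

lemma tree_outcome:
  assumes t: "is_tree V E"
  shows "num_leaves V E = 2 \<Longrightarrow> O_SR_is V E Out_M"
    and "num_leaves V E = 3 \<Longrightarrow> O_SR_is V E Out_N"
    and "num_leaves V E \<ge> 4 \<Longrightarrow> O_SR_is V E Out_B"
proof -
  let ?L = "{v \<in> V. degree V E v = 1}"
  have sg: "simple_graph V E" using t by (simp add: is_tree_def)
  then have fin: "finite V" by (simp add: simple_graph_def)
  have L: "card ?L = num_leaves V E" by (simp add: num_leaves_def)
  have groups: "resolving_groups V E {?L}"
    using tree_resolving_if_leaves_almost_all[OF t] by (simp add: resolving_groups_def)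
  have blocking: "pairwise (blocking_pair V (SR_win V E)) ?L"
    using leaves_blocking_pair[OF sg] by (simp add: pairwise_def)
  show "num_leaves V E = 2 \<Longrightarrow> O_SR_is V E Out_M"
    using O_SR_is_Out_M_if_resolving_pairs[OF fin groups] L by simp
  show "num_leaves V E = 3 \<Longrightarrow> O_SR_is V E Out_N"
    using O_SR_is_Out_N_if_resolving_triple[OF fin groups _ _ blocking] L by simp
  show "num_leaves V E \<ge> 4 \<Longrightarrow> O_SR_is V E Out_B"
    using O_SR_is_Out_B_if_blocking_clique_4[OF fin _ _ blocking] L by simp
qed

section \<open>Cycles\<close>

definition cycle_dist :: "nat \<Rightarrow> nat \<Rightarrow> nat \<Rightarrow> nat" where
  "cycle_dist n i j = (if i \<le> j then min (j - i) (n - (j - i)) else min (i - j) (n - (i - j)))"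

lemma Suc_mod_if_less: "i < n \<Longrightarrow> Suc i mod n = (if Suc i = n then 0 else Suc i)"
  by (simp add: mod_if)

lemma add_mod_if_less:
  assumes "(v::nat) < n" "d < n"
  shows "(v + d) mod n = (if v + d < n then v + d else v + d - n)"
proof (cases "v + d < n")
  case False
  then have "(v + d) mod n = (v + d - n) mod n" by (simp add: le_mod_geq)
  then show ?thesis using assms False by simp
qed simp

lemma add_mod_inj:
  assumes "(v::nat) < n" "d1 < n" "d2 < n" "(v + d1) mod n = (v + d2) mod n"
  shows "d1 = d2"
  using assms by (simp add: add_mod_if_less split: if_splits)

lemma add_mod_diff_mod:
  assumes "(y::nat) < n" "w < n"
  shows "(y + (w + n - y) mod n) mod n = w"
proof -
  have "(y + (w + n - y) mod n) mod n = (y + (w + n - y)) mod n" by (rule mod_add_right_eq)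
  also have "y + (w + n - y) = w + n" using assms by simp
  finally show ?thesis using assms by simp
qed

lemma cycle_E_iff: "cycle_E n i j \<longleftrightarrow> i < n \<and> j < n \<and>
   (j = (if Suc i = n then 0 else Suc i) \<or> i = (if Suc j = n then 0 else Suc j))"
  unfolding cycle_E_def using Suc_mod_if_less by auto

lemma cycle_dist_sym: "cycle_dist n i j = cycle_dist n j i"
  by (simp add: cycle_dist_def)

lemma cycle_dist_refl: "cycle_dist n i i = 0"
  by (simp add: cycle_dist_def)

lemma cycle_dist_le_half: "cycle_dist n i j \<le> n div 2"
  by (simp add: cycle_dist_def) linarith

lemma cycle_dist_adjacent:
  assumes "cycle_E n j j'" "i < n"
  shows "cycle_dist n i j' \<le> Suc (cycle_dist n i j)"
  using assms unfolding cycle_E_iff cycle_dist_def by (auto split: if_splits)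

lemma cycle_dist_rotate:
  assumes "v < n" "d1 < n" "d2 < n"
  shows "cycle_dist n ((v + d1) mod n) ((v + d2) mod n) = cycle_dist n d1 d2"
  using assms unfolding add_mod_if_less[OF assms(1,2)] add_mod_if_less[OF assms(1,3)]
  by (cases "v + d1 < n"; cases "v + d2 < n") (simp_all add: cycle_dist_def min_def, arith+)

lemma cycle_dist_le_walk:
  "successively (cycle_E n) xs \<Longrightarrow> xs \<noteq> [] \<Longrightarrow> set xs \<subseteq> cycle_V n \<Longrightarrow>
    cycle_dist n (hd xs) (last xs) \<le> length xs - 1"
proof (induction xs)
  case (Cons x ys)
  show ?case
  proof (cases "ys = []")
    case True then show ?thesis by (simp add: cycle_dist_refl)
  next
    case False
    have e: "cycle_E n (hd ys) x" and s: "successively (cycle_E n) ys"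
      using Cons.prems False by (auto simp: successively_Cons cycle_E_def)
    have "last ys \<in> cycle_V n" using Cons.prems(3) False by auto
    then have "last ys < n" by (simp add: cycle_V_def)
    then have "cycle_dist n (last ys) x \<le> Suc (cycle_dist n (last ys) (hd ys))"
      by (rule cycle_dist_adjacent[OF e])
    moreover have "cycle_dist n (hd ys) (last ys) \<le> length ys - 1"
      using Cons.IH s False Cons.prems by auto
    ultimately show ?thesis using False by (cases ys) (auto simp: cycle_dist_sym)
  qed
qed simp

lemma cycle_simple: "n \<ge> 3 \<Longrightarrow> simple_graph (cycle_V n) (cycle_E n)"
  unfolding simple_graph_def by (auto simp: cycle_V_def cycle_E_iff)

definition cycle_arc :: "nat \<Rightarrow> nat \<Rightarrow> nat \<Rightarrow> nat list" where
  "cycle_arc n y L = map (\<lambda>t. (y + t) mod n) [0..<Suc L]"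

lemma cycle_arc_walk:
  assumes "n \<ge> 3" "y < n"
  shows "walk_between (cycle_V n) (cycle_E n) y ((y + L) mod n) (cycle_arc n y L)"
proof -
  have "cycle_E n ((y + i) mod n) ((y + Suc i) mod n)" for i
    using assms unfolding cycle_E_def by (simp add: mod_Suc_eq)
  then have "walk (cycle_V n) (cycle_E n) (cycle_arc n y L)"
    using assms unfolding walk_def cycle_arc_def by (auto simp: cycle_V_def simp del: upt_Suc)
  then show ?thesis using assms
    by (simp add: walk_between_def cycle_arc_def hd_map last_map del: upt_Suc)
qed

lemma length_cycle_arc: "length (cycle_arc n y L) = Suc L"
  by (simp add: cycle_arc_def)

lemma cycle_arc_mem: "t \<le> L \<Longrightarrow> (y + t) mod n \<in> set (cycle_arc n y L)"
  unfolding cycle_arc_def by (auto simp del: upt_Suc)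

lemma cycle_walk_of_length_dist:
  assumes "n \<ge> 3" "y < n" "w < n"
  obtains xs where "walk_between (cycle_V n) (cycle_E n) y w xs" "length xs = Suc (cycle_dist n y w)"
proof -
  have "walk_between (cycle_V n) (cycle_E n) y w (cycle_arc n y ((w + n - y) mod n))"
    using cycle_arc_walk[OF assms(1,2)] add_mod_diff_mod[OF assms(2,3)] by metis
  moreover have "walk_between (cycle_V n) (cycle_E n) y w (rev (cycle_arc n w ((y + n - w) mod n)))"
    using walk_between_rev[OF cycle_simple[OF assms(1)] cycle_arc_walk[OF assms(1,3)]]
      add_mod_diff_mod[OF assms(3,2)] by metis
  moreover have "cycle_dist n y w = (w + n - y) mod n \<or> cycle_dist n y w = (y + n - w) mod n"
    using assms unfolding cycle_dist_def by (auto simp: mod_if)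
  ultimately show ?thesis using that by (auto simp: length_cycle_arc)
qed

lemma cycle_connected:
  assumes "n \<ge> 3"
  shows "connected_graph (cycle_V n) (cycle_E n)"
  unfolding connected_graph_def
proof (intro conjI ballI)
  show "cycle_V n \<noteq> {}" using assms by (auto simp: cycle_V_def)
  fix y w assume "y \<in> cycle_V n" "w \<in> cycle_V n"
  then have "y < n" "w < n" by (auto simp: cycle_V_def)
  then show "\<exists>xs. walk_between (cycle_V n) (cycle_E n) y w xs"
    by (meson cycle_walk_of_length_dist assms)
qed

lemma gdist_cycle:
  assumes "n \<ge> 3" "y < n" "w < n"
  shows "gdist (cycle_V n) (cycle_E n) y w = cycle_dist n y w"
proof (rule antisym)
  obtain xs where "walk_between (cycle_V n) (cycle_E n) y w xs" "length xs = Suc (cycle_dist n y w)"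
    using cycle_walk_of_length_dist[OF assms] .
  then show "gdist (cycle_V n) (cycle_E n) y w \<le> cycle_dist n y w"
    using gdist_le_walk_length by fastforce
next
  obtain g where g: "geodesic (cycle_V n) (cycle_E n) y w g"
    using geodesic_exists[OF cycle_connected[OF assms(1)]] assms by (auto simp: cycle_V_def)
  then show "cycle_dist n y w \<le> gdist (cycle_V n) (cycle_E n) y w"
    using cycle_dist_le_walk[of n g] unfolding geodesic_def walk_between_def walk_iff_successively
    by auto
qed

lemma cycle_diametral_blocking:
  assumes n: "n \<ge> 3" and xy: "x < n" "y < n" "x \<noteq> y" "cycle_dist n x y = n div 2"
  shows "blocking_pair (cycle_V n) (SR_win (cycle_V n) (cycle_E n)) x y"
proof (rule mutually_maximally_distant_blocking[OF cycle_connected[OF n]])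
  show "mutually_maximally_distant (cycle_V n) (cycle_E n) x y"
    using xy gdist_cycle[OF n] cycle_dist_le_half
    by (intro diametral_mutually_maximally_distant[OF cycle_simple[OF n] cycle_connected[OF n]])
      (auto simp: cycle_V_def)
qed (use xy in \<open>auto simp: cycle_V_def\<close>)

text \<open>In an even cycle, every vertex lies on one of the two arcs joining a vertex \<open>y\<close> to its
  antipode, and both arcs are geodesics.\<close>
lemma even_cycle_on_geodesic_to_antipode:
  assumes n: "n \<ge> 3" "even n" and xy: "x < n" "y < n"
  shows "on_geodesic (cycle_V n) (cycle_E n) x y ((y + n div 2) mod n)"
proof -
  let ?h = "n div 2" and ?y' = "(y + n div 2) mod n"
  have y': "?y' < n" and h: "?h < n" "n = 2 * ?h" using n by auto
  have "cycle_dist n ((y + 0) mod n) ((y + ?h) mod n) = cycle_dist n 0 ?h"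
    using xy n h by (intro cycle_dist_rotate) auto
  then have "gdist (cycle_V n) (cycle_E n) y ?y' = ?h"
    using gdist_cycle[OF n(1) xy(2) y'] xy h by (simp add: cycle_dist_def)
  then have geo: "geodesic (cycle_V n) (cycle_E n) y ?y' xs"
    if "walk_between (cycle_V n) (cycle_E n) y ?y' xs" "length xs = Suc ?h" for xs
    using that by (simp add: geodesic_def)
  define t where "t = (x + n - y) mod n"
  have xt: "(y + t) mod n = x" unfolding t_def by (rule add_mod_diff_mod[OF xy(2,1)])
  show ?thesis
  proof (cases "t \<le> ?h")
    case True
    have "geodesic (cycle_V n) (cycle_E n) y ?y' (cycle_arc n y ?h)"
      using cycle_arc_walk[OF n(1) xy(2)] by (intro geo) (simp_all add: length_cycle_arc)
    moreover have "x \<in> set (cycle_arc n y ?h)" using cycle_arc_mem[OF True] xt by metis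
    ultimately show ?thesis unfolding on_geodesic_def by blast
  next
    case False
    have "t < n" unfolding t_def using n by simp
    then have s: "t - ?h \<le> ?h" using h by linarith
    have "(?y' + (t - ?h)) mod n = (y + ?h + (t - ?h)) mod n" by (simp add: mod_add_left_eq)
    also have "y + ?h + (t - ?h) = y + t" using False by simp
    finally have x_back: "(?y' + (t - ?h)) mod n = x" using xt by simp
    have "(?y' + ?h) mod n = (y + ?h + ?h) mod n" by (simp add: mod_add_left_eq)
    also have "y + ?h + ?h = y + n" using h(2) by linarith
    finally have "(?y' + ?h) mod n = y" using xy(2) by simp
    with x_back have "x \<in> set (rev (cycle_arc n ?y' ?h))"
      and "walk_between (cycle_V n) (cycle_E n) y ?y' (rev (cycle_arc n ?y' ?h))"
      using cycle_arc_mem[OF s, of ?y' n]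
        walk_between_rev[OF cycle_simple[OF n(1)] cycle_arc_walk[OF n(1) y', of ?h]] by auto
    then show ?thesis unfolding on_geodesic_def using geo length_cycle_arc by fastforce
  qed
qed

lemma card_pair_diff_le_1: "card ({a, b} - S) \<le> 1 \<Longrightarrow> a \<noteq> b \<Longrightarrow> a \<in> S \<or> b \<in> S"
proof (rule ccontr)
  assume "card ({a, b} - S) \<le> 1" "a \<noteq> b" "\<not> (a \<in> S \<or> b \<in> S)"
  then have "{a, b} - S = {a, b}" by blast
  then show False using \<open>card ({a, b} - S) \<le> 1\<close> \<open>a \<noteq> b\<close> by simp
qed

lemma even_cycle_outcome:
  assumes n: "n \<ge> 3" "even n"
  shows "O_SR_is (cycle_V n) (cycle_E n) Out_M"
proof (rule O_SR_is_Out_M_if_resolving_pairs)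
  let ?h = "n div 2"
  let ?Gs = "{{i, i + ?h} | i. i < ?h}"
  have h: "n = 2 * ?h" "0 < ?h" using n by auto
  have hit: "y \<in> S \<or> (y + ?h) mod n \<in> S" if "\<forall>g\<in>?Gs. card (g - S) \<le> 1" "y < n" for S y
  proof (cases "y < ?h")
    case True
    then have "card ({y, y + ?h} - S) \<le> 1" using that(1) by blast
    then have "y \<in> S \<or> y + ?h \<in> S" using h by (intro card_pair_diff_le_1) auto
    then show ?thesis using True h by simp
  next
    case False
    then have "card ({y - ?h, y - ?h + ?h} - S) \<le> 1" using that h by (intro that(1)[rule_format]) auto
    moreover have "(y + ?h) mod n = y - ?h" using False that(2) h by (simp add: add_mod_if_less)
    ultimately show ?thesis using False h card_pair_diff_le_1 by fastforce
  qed
  show "resolving_groups (cycle_V n) (cycle_E n) ?Gs"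
    unfolding resolving_groups_def
  proof (intro conjI allI impI)
    show "\<forall>g\<in>?Gs. g \<subseteq> cycle_V n" using h by (auto simp: cycle_V_def)
    show "pairwise disjnt ?Gs" by (auto simp: pairwise_def disjnt_def)
    fix S assume S: "S \<subseteq> cycle_V n" "\<forall>g\<in>?Gs. card (g - S) \<le> 1"
    show "strong_resolving_set (cycle_V n) (cycle_E n) S"
    proof (rule strong_resolving_setI[OF cycle_connected[OF n(1)] S(1)])
      fix x y assume xy: "x \<in> cycle_V n" "y \<in> cycle_V n" "x \<notin> S" "y \<notin> S"
      then have "(y + ?h) mod n \<in> S" using hit[OF S(2)] by (auto simp: cycle_V_def)
      moreover have "on_geodesic (cycle_V n) (cycle_E n) x y ((y + ?h) mod n)"
        using xy by (intro even_cycle_on_geodesic_to_antipode[OF n]) (auto simp: cycle_V_def)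
      ultimately show "\<exists>z\<in>S. on_geodesic (cycle_V n) (cycle_E n) x y z \<or> on_geodesic (cycle_V n) (cycle_E n) y x z"
        by blast
    qed
  qed
qed (auto simp: cycle_V_def card_insert_le)

lemma triangle_outcome: "O_SR_is (cycle_V 3) (cycle_E 3) Out_N"
proof (rule O_SR_is_Out_N_if_resolving_triple[of _ _ "{cycle_V 3}" "cycle_V 3"])
  show "resolving_groups (cycle_V 3) (cycle_E 3) {cycle_V 3}"
    unfolding resolving_groups_def
  proof (intro conjI allI impI)
    fix S assume S: "S \<subseteq> cycle_V 3" "\<forall>g\<in>{cycle_V 3}. card (g - S) \<le> 1"
    have "finite (cycle_V 3 - S)" "card (cycle_V 3 - S) \<le> Suc 0" using S(2) by (simp_all add: cycle_V_def)
    then have "x = y" if "x \<in> cycle_V 3 - S" "y \<in> cycle_V 3 - S" for x y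
      using that card_le_Suc0_iff_eq by blast
    then show "strong_resolving_set (cycle_V 3) (cycle_E 3) S"
      by (intro strong_resolving_setI[OF cycle_connected S(1)]) auto
  qed auto
  show "pairwise (blocking_pair (cycle_V 3) (SR_win (cycle_V 3) (cycle_E 3))) (cycle_V 3)"
    unfolding pairwise_def
  proof (intro ballI impI)
    fix x y assume "x \<in> cycle_V 3" "y \<in> cycle_V 3" "x \<noteq> y"
    then show "blocking_pair (cycle_V 3) (SR_win (cycle_V 3) (cycle_E 3)) x y"
      by (intro cycle_diametral_blocking) (auto simp: cycle_V_def cycle_dist_def)
  qed
qed (auto simp: cycle_V_def)

text \<open>In an odd cycle of length \<open>2k + 1 \<ge> 5\<close>, the vertex \<open>v + 1\<close> is at distance \<open>k\<close>
  from both \<open>v + k + 1\<close> and \<open>v + k + 2\<close>.\<close>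
lemma odd_cycle_double_threat:
  assumes n: "n \<ge> 5" "odd n" and v: "v < n"
  shows "has_double_threat (cycle_V n) (SR_win (cycle_V n) (cycle_E n)) (cycle_V n - {v})"
proof -
  let ?k = "n div 2"
  let ?x = "(v + 1) mod n" and ?y = "(v + (1 + ?k)) mod n" and ?z = "(v + (2 + ?k)) mod n"
  have k: "n = 2 * ?k + 1" "?k \<ge> 2" using n by auto
  have lt: "0 < n" "1 < n" "1 + ?k < n" "2 + ?k < n" using k by linarith+
  have ne: "(v + d1) mod n \<noteq> (v + d2) mod n" if "d1 < n" "d2 < n" "d1 \<noteq> d2" for d1 d2
    using add_mod_inj[OF v that(1,2)] that(3) by blast
  have ne0: "(v + d) mod n \<noteq> v" if "0 < d" "d < n" for d
    using add_mod_inj[OF v lt(1) that(2)] that(1) v by auto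
  have distinct: "?x \<noteq> ?y" "?x \<noteq> ?z" "?y \<noteq> ?z" "?x \<noteq> v" "?y \<noteq> v" "?z \<noteq> v"
    using ne[OF lt(2,3)] ne[OF lt(2,4)] ne[OF lt(3,4)] ne0[OF _ lt(2)] ne0[OF _ lt(3)] ne0[OF _ lt(4)] k(2)
    by simp_all
  have "cycle_dist n ?x ?y = cycle_dist n 1 (1 + ?k)" by (rule cycle_dist_rotate[OF v lt(2,3)])
  also have "\<dots> = ?k" using k unfolding cycle_dist_def by simp
  finally have dxy: "cycle_dist n ?x ?y = ?k" .
  have "cycle_dist n ?x ?z = cycle_dist n 1 (2 + ?k)" by (rule cycle_dist_rotate[OF v lt(2,4)])
  also have "\<dots> = ?k" using k unfolding cycle_dist_def by simp
  finally have dxz: "cycle_dist n ?x ?z = ?k" .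
  have "blocking_pair (cycle_V n) (SR_win (cycle_V n) (cycle_E n)) ?x ?y"
    using n distinct(1) dxy by (intro cycle_diametral_blocking) simp_all
  moreover have "blocking_pair (cycle_V n) (SR_win (cycle_V n) (cycle_E n)) ?x ?z"
    using n distinct(2) dxz by (intro cycle_diametral_blocking) simp_all
  moreover have "{?x, ?y, ?z} \<subseteq> cycle_V n - {v}" using distinct lt by (auto simp: cycle_V_def)
  ultimately show ?thesis using distinct unfolding has_double_threat_def by auto
qed

lemma odd_cycle_outcome:
  assumes n: "n \<ge> 5" "odd n"
  shows "O_SR_is (cycle_V n) (cycle_E n) Out_B"
proof -
  have fin: "finite (cycle_V n)" by (simp add: cycle_V_def)
  have "breaker_wins (cycle_V n) (SR_win (cycle_V n) (cycle_E n)) {} {} True"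
    using n odd_cycle_double_threat[OF n]
    by (intro breaker_wins_double_threat_after_move[OF fin]) (auto simp: cycle_V_def)
  moreover have "breaker_wins (cycle_V n) (SR_win (cycle_V n) (cycle_E n)) {} {} False"
    using n odd_cycle_double_threat[OF n, of 0]
    by (intro breaker_wins_double_threat[OF fin]) (auto elim: has_double_threat_mono)
  ultimately show ?thesis by (simp add: O_SR_is_Out_B_iff)
qed

section \<open>The Petersen graph\<close>

lemma petersen_finite: "finite petersen_V"
proof -
  have "petersen_V \<subseteq> Pow {0..<5}" by (auto simp: petersen_V_def)
  then show ?thesis by (rule finite_subset) simp
qed

lemma petersen_vertex_finite: "S \<in> petersen_V \<Longrightarrow> finite S"
  by (auto simp: petersen_V_def intro: finite_subset)

lemma petersen_simple: "simple_graph petersen_V petersen_E"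
  unfolding simple_graph_def using petersen_finite
  by (auto simp: petersen_E_def petersen_V_def)

text \<open>Two distinct intersecting 2-subsets of a 5-set span three elements; the remaining two
  form their common neighbour.\<close>
lemma petersen_common_neighbour:
  assumes u: "u \<in> petersen_V" and w: "w \<in> petersen_V" and uw: "u \<noteq> w" "u \<inter> w \<noteq> {}"
  shows "{0..<5} - (u \<union> w) \<in> petersen_V"
proof -
  have fin: "finite u" "finite w" using u w petersen_vertex_finite by auto
  have card: "card u = 2" "card w = 2" using u w by (auto simp: petersen_V_def)
  have "u \<inter> w \<subset> u"
    using uw card_subset_eq[OF fin(2), of u] card by auto
  then have "card (u \<inter> w) < 2" using psubset_card_mono[OF fin(1)] card by simp
  moreover have "card (u \<inter> w) \<noteq> 0" using uw fin by simp
  ultimately have "card (u \<union> w) = 3" using card_Un_Int[OF fin] card by simp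
  moreover have "u \<union> w \<subseteq> {0..<5}" using u w by (auto simp: petersen_V_def)
  ultimately have "card ({0..<5} - (u \<union> w)) = 2" using fin by (simp add: card_Diff_subset)
  then show ?thesis by (auto simp: petersen_V_def)
qed

lemma petersen_walk_of_length_le_2:
  assumes u: "u \<in> petersen_V" and w: "w \<in> petersen_V"
  obtains xs where "walk_between petersen_V petersen_E u w xs" "length xs \<le> 3"
proof -
  consider "u = w" | "u \<inter> w = {}" | "u \<noteq> w" "u \<inter> w \<noteq> {}" by blast
  then show ?thesis
  proof cases
    case 1 then show ?thesis using that walk_between_singleton[OF u] by fastforce
  next
    case 2
    then have "walk_between petersen_V petersen_E u w [u, w]" using u w
      by (simp add: walk_between_def walk_iff_successively petersen_E_def)
    then show ?thesis using that by fastforce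
  next
    case 3
    let ?c = "{0..<5} - (u \<union> w)"
    have "?c \<in> petersen_V" by (rule petersen_common_neighbour[OF u w 3])
    then have "walk_between petersen_V petersen_E u w [u, ?c, w]" using u w
      by (auto simp: walk_between_def walk_iff_successively petersen_E_def)
    then show ?thesis using that by fastforce
  qed
qed

lemma petersen_connected: "connected_graph petersen_V petersen_E"
  unfolding connected_graph_def
proof (intro conjI ballI)
  have "{0, 1} \<in> petersen_V" by (simp add: petersen_V_def)
  then show "petersen_V \<noteq> {}" by blast
next
  fix u w assume "u \<in> petersen_V" "w \<in> petersen_V"
  then show "\<exists>xs. walk_between petersen_V petersen_E u w xs"
    by (meson petersen_walk_of_length_le_2)
qed

lemma petersen_gdist_le_2:
  assumes "u \<in> petersen_V" "w \<in> petersen_V"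
  shows "gdist petersen_V petersen_E u w \<le> 2"
proof -
  obtain xs where "walk_between petersen_V petersen_E u w xs" "length xs \<le> 3"
    using petersen_walk_of_length_le_2[OF assms] .
  then show ?thesis using gdist_le_walk_length by fastforce
qed

lemma petersen_intersecting_blocking:
  assumes xy: "x \<in> petersen_V" "y \<in> petersen_V" "x \<noteq> y" "x \<inter> y \<noteq> {}"
  shows "blocking_pair petersen_V (SR_win petersen_V petersen_E) x y"
proof (rule mutually_maximally_distant_blocking[OF petersen_connected xy(1-3)])
  have "gdist petersen_V petersen_E x y \<ge> 2"
    using xy by (intro gdist_ge_2[OF petersen_connected]) (auto simp: petersen_E_def)
  then show "mutually_maximally_distant petersen_V petersen_E x y"
    using xy petersen_gdist_le_2
    by (intro diametral_mutually_maximally_distant[OF petersen_simple petersen_connected]) (auto intro: order_trans)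
qed

text \<open>The four vertices containing a fixed element \<open>c\<close> pairwise intersect.\<close>
lemma petersen_double_threat:
  assumes c: "c < 5"
  shows "has_double_threat petersen_V (SR_win petersen_V petersen_E) {S \<in> petersen_V. c \<in> S}"
proof (rule blocking_clique_double_threat)
  let ?T = "(\<lambda>d. {c, d}) ` ({0..<5} - {c})"
  have "inj_on (\<lambda>d. {c, d}) ({0..<5} - {c})" by (auto simp: inj_on_def doubleton_eq_iff)
  then have "card ?T = 4" using c by (simp add: card_image)
  moreover have "card ?T \<le> card {S \<in> petersen_V. c \<in> S}"
    using c petersen_finite by (intro card_mono) (auto simp: petersen_V_def)
  ultimately show "card {S \<in> petersen_V. c \<in> S} \<ge> 3" by linarith
  show "pairwise (blocking_pair petersen_V (SR_win petersen_V petersen_E)) {S \<in> petersen_V. c \<in> S}"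
    by (auto simp: pairwise_def intro: petersen_intersecting_blocking)
qed

lemma petersen_outcome: "O_SR_is petersen_V petersen_E Out_B"
proof -
  have "breaker_wins petersen_V (SR_win petersen_V petersen_E) {} {} True"
  proof (rule breaker_wins_double_threat_after_move[OF petersen_finite])
    fix v assume v: "v \<in> petersen_V - ({} \<union> {})"
    then have "card v = 2" "v \<subseteq> {0..<5}" by (auto simp: petersen_V_def)
    then have "\<not> {0..<5} \<subseteq> v" using card_mono[OF petersen_vertex_finite[of v]] v by fastforce
    then obtain c where "c \<in> {0..<5}" "c \<notin> v" by blast
    then show "has_double_threat petersen_V (SR_win petersen_V petersen_E) (petersen_V - ({} \<union> {}) - {v})"
      using petersen_double_threat[of c] by (auto elim: has_double_threat_mono)
  qed (use petersen_connected in \<open>auto simp: connected_graph_def\<close>)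
  moreover have "breaker_wins petersen_V (SR_win petersen_V petersen_E) {} {} False"
    using petersen_double_threat[of 0]
    by (intro breaker_wins_double_threat[OF petersen_finite]) (auto elim: has_double_threat_mono)
  ultimately show ?thesis by (simp add: O_SR_is_Out_B_iff)
qed

section \<open>Complete multipartite graphs\<close>

context
  fixes m :: nat and a :: "nat \<Rightarrow> nat"
  assumes two_parts: "2 \<le> m" and parts_nonempty: "\<forall>i\<in>{1..m}. 1 \<le> a i"
begin

lemma parts_pos: "i \<in> {1..m} \<Longrightarrow> 0 < a i"
  using parts_nonempty by fastforce

lemma multipartite_V_iff: "u \<in> multipartite_V m a \<longleftrightarrow> fst u \<in> {1..m} \<and> snd u < a (fst u)"
  by (cases u) (simp add: multipartite_V_def)

lemma multipartite_finite: "finite (multipartite_V m a)"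
proof -
  have "multipartite_V m a = (SIGMA i:{1..m}. {..<a i})" by (auto simp: multipartite_V_def)
  then show ?thesis by simp
qed

lemma multipartite_simple: "simple_graph (multipartite_V m a) (multipartite_E m a)"
  unfolding simple_graph_def multipartite_E_def using multipartite_finite by auto

lemma multipartite_other_part:
  assumes "u \<in> multipartite_V m a"
  obtains w where "w \<in> multipartite_V m a" "fst w \<noteq> fst u"
proof -
  let ?j = "if fst u = 1 then 2 else 1"
  have "?j \<in> {1..m}" using two_parts by auto
  then have "(?j, 0) \<in> multipartite_V m a" using parts_pos by (simp add: multipartite_V_iff)
  moreover have "fst (?j, 0) \<noteq> fst u" by simp
  ultimately show ?thesis by (rule that)
qed

lemma multipartite_walk:
  assumes "set xs \<subseteq> multipartite_V m a" "xs \<noteq> []" "successively (\<lambda>u v. fst u \<noteq> fst v) xs"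
  shows "walk_between (multipartite_V m a) (multipartite_E m a) (hd xs) (last xs) xs"
  using assms unfolding walk_between_def walk_iff_successively multipartite_E_def
  by (auto elim: successively_mono)

lemma multipartite_connected: "connected_graph (multipartite_V m a) (multipartite_E m a)"
  unfolding connected_graph_def
proof (intro conjI ballI)
  have "(1, 0) \<in> multipartite_V m a" using two_parts parts_pos by (simp add: multipartite_V_iff)
  then show "multipartite_V m a \<noteq> {}" by blast
next
  fix u v assume uv: "u \<in> multipartite_V m a" "v \<in> multipartite_V m a"
  obtain w where "w \<in> multipartite_V m a" "fst w \<noteq> fst u" using multipartite_other_part[OF uv(1)] .
  then show "\<exists>xs. walk_between (multipartite_V m a) (multipartite_E m a) u v xs"
    using uv multipartite_walk[of "[u, v]"] multipartite_walk[of "[u, w, v]"]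
    by (cases "fst u = fst v") fastforce+
qed

lemma multipartite_gdist_le_2:
  assumes "u \<in> multipartite_V m a" "v \<in> multipartite_V m a"
  shows "gdist (multipartite_V m a) (multipartite_E m a) u v \<le> 2"
proof -
  obtain w where "w \<in> multipartite_V m a" "fst w \<noteq> fst u" using multipartite_other_part[OF assms(1)] .
  then show ?thesis
    using assms gdist_le_walk_length multipartite_walk[of "[u, v]"] multipartite_walk[of "[u, w, v]"]
    by (cases "fst u = fst v") fastforce+
qed

lemma multipartite_gdist_same_part:
  assumes "u \<in> multipartite_V m a" "v \<in> multipartite_V m a" "fst u = fst v" "u \<noteq> v"
  shows "gdist (multipartite_V m a) (multipartite_E m a) u v = 2"
  using assms multipartite_gdist_le_2[OF assms(1,2)]
    gdist_ge_2[OF multipartite_connected assms(1,2,4)] by (simp add: multipartite_E_def)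

lemma multipartite_same_part_blocking:
  assumes "x \<in> multipartite_V m a" "y \<in> multipartite_V m a" "fst x = fst y" "x \<noteq> y"
  shows "blocking_pair (multipartite_V m a) (SR_win (multipartite_V m a) (multipartite_E m a)) x y"
proof (rule mutually_maximally_distant_blocking[OF multipartite_connected assms(1,2,4)])
  show "mutually_maximally_distant (multipartite_V m a) (multipartite_E m a) x y"
    using assms multipartite_gdist_le_2 multipartite_gdist_same_part[OF assms]
    by (intro diametral_mutually_maximally_distant[OF multipartite_simple multipartite_connected]) auto
qed

lemma multipartite_singleton_parts_blocking:
  assumes "x \<in> multipartite_V m a" "y \<in> multipartite_V m a" "a (fst x) = 1" "a (fst y) = 1" "x \<noteq> y"
  shows "blocking_pair (multipartite_V m a) (SR_win (multipartite_V m a) (multipartite_E m a)) x y"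
proof (rule mutually_maximally_distant_blocking[OF multipartite_connected assms(1,2,5)])
  have "multipartite_E m a u z" if "u \<in> {x, y}" "z \<in> multipartite_V m a" "z \<noteq> u" for u z
    using assms that by (cases u, cases z) (auto simp: multipartite_E_def multipartite_V_iff)
  then show "mutually_maximally_distant (multipartite_V m a) (multipartite_E m a) x y"
    by (intro universal_mutually_maximally_distant[OF multipartite_connected assms(1,2,5)])
qed

lemma multipartite_on_geodesic:
  assumes "x \<in> multipartite_V m a" "y \<in> multipartite_V m a" "z \<in> multipartite_V m a"
    "fst x \<noteq> fst y" "fst z = fst y" "z \<noteq> y"
  shows "on_geodesic (multipartite_V m a) (multipartite_E m a) x y z"
proof -
  have "geodesic (multipartite_V m a) (multipartite_E m a) y z [y, x, z]"
    using assms multipartite_walk[of "[y, x, z]"] multipartite_gdist_same_part[of z y]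
    by (simp add: geodesic_def gdist_sym[OF multipartite_simple multipartite_connected])
  then show ?thesis unfolding on_geodesic_def by auto
qed

lemma multipartite_resolving:
  assumes S: "S \<subseteq> multipartite_V m a"
    and parts: "\<And>x y. x \<in> multipartite_V m a - S \<Longrightarrow> y \<in> multipartite_V m a - S \<Longrightarrow> fst x = fst y \<Longrightarrow> x = y"
    and singletons: "\<And>x y. x \<in> multipartite_V m a - S \<Longrightarrow> y \<in> multipartite_V m a - S \<Longrightarrow>
      a (fst x) = 1 \<Longrightarrow> a (fst y) = 1 \<Longrightarrow> x = y"
  shows "strong_resolving_set (multipartite_V m a) (multipartite_E m a) S"
proof (rule strong_resolving_setI[OF multipartite_connected S])
  fix x y assume xy: "x \<in> multipartite_V m a" "y \<in> multipartite_V m a" "x \<noteq> y" "x \<notin> S" "y \<notin> S"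
  have "fst x \<noteq> fst y" using parts xy by blast
  have big: "a (fst x) \<noteq> 1 \<or> a (fst y) \<noteq> 1" using singletons xy by blast
  have partner: "\<exists>z\<in>S. z \<in> multipartite_V m a \<and> fst z = fst u \<and> z \<noteq> u"
    if u: "u \<in> {x, y}" "a (fst u) \<noteq> 1" for u
  proof -
    obtain i k where "u = (i, k)" by fastforce
    moreover have "a i \<ge> 2" using u xy parts_nonempty \<open>u = (i, k)\<close> by (force simp: multipartite_V_iff)
    moreover define z where "z = (i, if k = 0 then 1 else 0 :: nat)"
    ultimately have z: "z \<in> multipartite_V m a" "fst z = fst u" "z \<noteq> u"
      using u xy by (auto simp: multipartite_V_iff)
    moreover have "u \<in> multipartite_V m a - S" using u xy by auto
    ultimately have "z \<in> S" using parts[of z u] by blast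
    then show ?thesis using z by blast
  qed
  show "\<exists>z\<in>S. on_geodesic (multipartite_V m a) (multipartite_E m a) x y z \<or>
                on_geodesic (multipartite_V m a) (multipartite_E m a) y x z"
    using big partner xy \<open>fst x \<noteq> fst y\<close> multipartite_on_geodesic by (metis insertCI)
qed

definition partite_set :: "nat \<Rightarrow> (nat \<times> nat) set" where
  "partite_set i = {i} \<times> {..<a i}"

text \<open>The vertices forming partite sets of size one, i.e. those adjacent to all other vertices.\<close>
definition universal_vertices :: "(nat \<times> nat) set" where
  "universal_vertices = (\<lambda>i. (i, 0)) ` {i\<in>{1..m}. a i = 1}"

definition multipartite_groups :: "(nat \<times> nat) set set" where
  "multipartite_groups = {partite_set i | i. i \<in> {1..m} \<and> a i \<ge> 2} \<union> {universal_vertices}"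

lemma card_partite_set: "card (partite_set i) = a i"
  by (simp add: partite_set_def card_cartesian_product)

lemma card_universal_vertices: "card universal_vertices = card {i\<in>{1..m}. a i = 1}"
  unfolding universal_vertices_def by (rule card_image) (auto simp: inj_on_def)

lemma partite_set_subset: "i \<in> {1..m} \<Longrightarrow> partite_set i \<subseteq> multipartite_V m a"
  by (auto simp: partite_set_def multipartite_V_iff)

lemma universal_vertices_subset: "universal_vertices \<subseteq> multipartite_V m a"
  using parts_pos by (auto simp: universal_vertices_def multipartite_V_iff)

lemma disjnt_partite_sets: "i \<noteq> j \<Longrightarrow> disjnt (partite_set i) (partite_set j)"
  by (auto simp: partite_set_def disjnt_def)

lemma disjnt_partite_set_universal_vertices: "a i \<ge> 2 \<Longrightarrow> disjnt (partite_set i) universal_vertices"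
  by (auto simp: partite_set_def universal_vertices_def disjnt_def)

lemma partite_set_blocking:
  "i \<in> {1..m} \<Longrightarrow>
    pairwise (blocking_pair (multipartite_V m a) (SR_win (multipartite_V m a) (multipartite_E m a))) (partite_set i)"
  unfolding pairwise_def using partite_set_subset
  by (auto intro!: multipartite_same_part_blocking simp: partite_set_def)

lemma universal_vertices_blocking:
  "pairwise (blocking_pair (multipartite_V m a) (SR_win (multipartite_V m a) (multipartite_E m a)))
    universal_vertices"
  unfolding pairwise_def using universal_vertices_subset
  by (auto intro!: multipartite_singleton_parts_blocking simp: universal_vertices_def)

lemma multipartite_resolving_groups:
  "resolving_groups (multipartite_V m a) (multipartite_E m a) multipartite_groups"
  unfolding resolving_groups_def
proof (intro conjI allI impI)
  show "\<forall>g\<in>multipartite_groups. g \<subseteq> multipartite_V m a"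
    using partite_set_subset universal_vertices_subset by (auto simp: multipartite_groups_def)
  show "pairwise disjnt multipartite_groups"
  proof (rule pairwiseI)
    fix g h assume "g \<in> multipartite_groups" "h \<in> multipartite_groups" "g \<noteq> h"
    then show "disjnt g h"
      unfolding multipartite_groups_def
      using disjnt_partite_set_universal_vertices disjnt_partite_set_universal_vertices[THEN disjnt_sym]
      by (auto intro: disjnt_partite_sets)
  qed
next
  fix S assume S: "S \<subseteq> multipartite_V m a" "\<forall>g\<in>multipartite_groups. card (g - S) \<le> 1"
  have fin: "finite (g - S)" if "g \<in> multipartite_groups" for g
    using that partite_set_subset universal_vertices_subset multipartite_finite
    by (auto simp: multipartite_groups_def intro: finite_subset)
  have almost: "x = y" if "g \<in> multipartite_groups" "x \<in> g - S" "y \<in> g - S" for g x y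
    using that S(2) card_le_Suc0_iff_eq[OF fin] by (metis One_nat_def)
  show "strong_resolving_set (multipartite_V m a) (multipartite_E m a) S"
  proof (rule multipartite_resolving[OF S(1)])
    fix x y assume xy: "x \<in> multipartite_V m a - S" "y \<in> multipartite_V m a - S" "fst x = fst y"
    show "x = y"
    proof (cases "a (fst x) \<ge> 2")
      case True
      then have "partite_set (fst x) \<in> multipartite_groups" "x \<in> partite_set (fst x)" "y \<in> partite_set (fst x)"
        using xy by (auto simp: multipartite_groups_def partite_set_def multipartite_V_iff mem_Times_iff)
      then show ?thesis using almost xy by blast
    next
      case False
      then show ?thesis using xy parts_nonempty
        by (cases x, cases y) (fastforce simp: multipartite_V_iff)
    qed
  next
    fix x y assume xy: "x \<in> multipartite_V m a - S" "y \<in> multipartite_V m a - S" "a (fst x) = 1" "a (fst y) = 1"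
    then have "x \<in> universal_vertices" "y \<in> universal_vertices"
      by (cases x, cases y, auto simp: universal_vertices_def multipartite_V_iff image_iff)+
    moreover have "universal_vertices \<in> multipartite_groups" by (simp add: multipartite_groups_def)
    ultimately show "x = y" using almost xy by blast
  qed
qed

lemma multipartite_outcome_B:
  assumes "card {i \<in> {1..m}. a i = 1} \<ge> 4 \<or> (\<exists>i\<in>{1..m}. a i \<ge> 4)
     \<or> (\<exists>i\<in>{1..m}. card {i \<in> {1..m}. a i = 1} = 3 \<and> a i = 3)
     \<or> (\<exists>i\<in>{1..m}. \<exists>j\<in>{1..m}. i \<noteq> j \<and> a i = 3 \<and> a j = 3)"
  shows "O_SR_is (multipartite_V m a) (multipartite_E m a) Out_B"
  using assms
proof (elim disjE bexE conjE)
  assume "card {i \<in> {1..m}. a i = 1} \<ge> 4"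
  then show ?thesis
    using O_SR_is_Out_B_if_blocking_clique_4[OF multipartite_finite universal_vertices_subset _
        universal_vertices_blocking]
    by (simp add: card_universal_vertices)
next
  fix i assume "i \<in> {1..m}" "a i \<ge> 4"
  then show ?thesis
    using O_SR_is_Out_B_if_blocking_clique_4[OF multipartite_finite partite_set_subset _ partite_set_blocking]
    by (simp add: card_partite_set)
next
  fix i assume "i \<in> {1..m}" "card {i \<in> {1..m}. a i = 1} = 3" "a i = 3"
  then show ?thesis
    using O_SR_is_Out_B_if_two_blocking_cliques[OF multipartite_finite universal_vertices_subset _
        universal_vertices_blocking partite_set_subset _ partite_set_blocking]
      disjnt_partite_set_universal_vertices[of i, THEN disjnt_sym]
    by (simp add: card_universal_vertices card_partite_set)
next
  fix i j assume "i \<in> {1..m}" "j \<in> {1..m}" "i \<noteq> j" "a i = 3" "a j = 3"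
  then show ?thesis
    using O_SR_is_Out_B_if_two_blocking_cliques[OF multipartite_finite partite_set_subset _
        partite_set_blocking partite_set_subset _ partite_set_blocking] disjnt_partite_sets[of i j]
    by (simp add: card_partite_set)
qed

lemma multipartite_groups_cases:
  assumes "g \<in> multipartite_groups"
  obtains i where "i \<in> {1..m}" "a i \<ge> 2" "g = partite_set i" | "g = universal_vertices"
  using assms unfolding multipartite_groups_def by blast

lemma card_multipartite_group_le_2:
  assumes "g \<in> multipartite_groups"
    and "\<And>i. i \<in> {1..m} \<Longrightarrow> g = partite_set i \<Longrightarrow> a i \<le> 2"
    and "g = universal_vertices \<Longrightarrow> card {i \<in> {1..m}. a i = 1} \<le> 2"
  shows "card g \<le> 2"
  using assms(1)
proof (cases rule: multipartite_groups_cases)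
  case (1 i) then show ?thesis using assms(2) by (simp add: card_partite_set)
next
  case 2 then show ?thesis using assms(3) by (simp add: card_universal_vertices)
qed

lemma multipartite_outcome_N:
  assumes "(card {i \<in> {1..m}. a i = 1} = 3 \<and> (\<forall>i\<in>{1..m}. a i \<le> 2)) \<or>
    (card {i \<in> {1..m}. a i = 1} \<le> 2 \<and> (\<exists>i\<in>{1..m}. a i = 3 \<and> (\<forall>j\<in>{1..m}. j \<noteq> i \<longrightarrow> a j \<le> 2)))"
  shows "O_SR_is (multipartite_V m a) (multipartite_E m a) Out_N"
  using assms
proof (elim disjE bexE conjE)
  assume s: "card {i \<in> {1..m}. a i = 1} = 3" and small: "\<forall>i\<in>{1..m}. a i \<le> 2"
  have "card g \<le> 2" if "g \<in> multipartite_groups - {universal_vertices}" for g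
    using that small by (intro card_multipartite_group_le_2) auto
  moreover have "universal_vertices \<in> multipartite_groups" by (simp add: multipartite_groups_def)
  ultimately show ?thesis
    using O_SR_is_Out_N_if_resolving_triple[OF multipartite_finite multipartite_resolving_groups _ _
        universal_vertices_blocking] s by (simp add: card_universal_vertices)
next
  fix i assume i: "i \<in> {1..m}" "a i = 3" and s: "card {i \<in> {1..m}. a i = 1} \<le> 2"
    and small: "\<forall>j\<in>{1..m}. j \<noteq> i \<longrightarrow> a j \<le> 2"
  have "card g \<le> 2" if "g \<in> multipartite_groups - {partite_set i}" for g
    using that small s by (intro card_multipartite_group_le_2) auto
  moreover have "partite_set i \<in> multipartite_groups" using i by (auto simp: multipartite_groups_def)
  ultimately show ?thesis
    using O_SR_is_Out_N_if_resolving_triple[OF multipartite_finite multipartite_resolving_groups _ _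
        partite_set_blocking[OF i(1)]] i(2) by (simp add: card_partite_set)
qed

lemma multipartite_outcome_M:
  assumes "\<forall>i\<in>{1..m}. max (card {i \<in> {1..m}. a i = 1}) (a i) \<le> 2"
  shows "O_SR_is (multipartite_V m a) (multipartite_E m a) Out_M"
proof (rule O_SR_is_Out_M_if_resolving_pairs[OF multipartite_finite multipartite_resolving_groups])
  have "1 \<in> {1..m}" using two_parts by simp
  then have "card {i \<in> {1..m}. a i = 1} \<le> 2" using assms by fastforce
  then show "\<forall>g\<in>multipartite_groups. card g \<le> 2"
    using assms by (auto intro: card_multipartite_group_le_2)
qed

end

theorem mainTheorem8:
  shows
  "(\<forall>(V :: 'a set) E. is_tree V E \<and> card V \<ge> 2 \<longrightarrow>
       (num_leaves V E = 2 \<longrightarrow> O_SR_is V E Out_M) \<and>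
       (num_leaves V E = 3 \<longrightarrow> O_SR_is V E Out_N) \<and>
       (num_leaves V E \<ge> 4 \<longrightarrow> O_SR_is V E Out_B))
   \<and> (\<forall>n::nat. n \<ge> 3 \<longrightarrow>
       (even n \<longrightarrow> O_SR_is (cycle_V n) (cycle_E n) Out_M) \<and>
       (n = 3 \<longrightarrow> O_SR_is (cycle_V n) (cycle_E n) Out_N) \<and>
       (odd n \<and> n \<ge> 5 \<longrightarrow> O_SR_is (cycle_V n) (cycle_E n) Out_B))
   \<and> O_SR_is petersen_V petersen_E Out_B
   \<and> (\<forall>(m::nat) (a::nat \<Rightarrow> nat). m \<ge> 2 \<and> (\<forall>i\<in>{1..m}. a i \<ge> 1) \<and> (\<Sum>i=1..m. a i) \<ge> 3 \<longrightarrow>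
       (let s = card {i \<in> {1..m}. a i = 1}; G = multipartite_V m a; EG = multipartite_E m a in
        ((s \<ge> 4 \<or> (\<exists>i\<in>{1..m}. a i \<ge> 4) \<or> (\<exists>i\<in>{1..m}. s = 3 \<and> a i = 3)
            \<or> (\<exists>i\<in>{1..m}. \<exists>j\<in>{1..m}. i \<noteq> j \<and> a i = 3 \<and> a j = 3))
           \<longrightarrow> O_SR_is G EG Out_B) \<and>
        (((s = 3 \<and> (\<forall>i\<in>{1..m}. a i \<le> 2)) \<or>
          (s \<le> 2 \<and> (\<exists>i\<in>{1..m}. a i = 3 \<and> (\<forall>j\<in>{1..m}. j \<noteq> i \<longrightarrow> a j \<le> 2))))
           \<longrightarrow> O_SR_is G EG Out_N) \<and>
        ((\<forall>i\<in>{1..m}. max s (a i) \<le> 2) \<longrightarrow> O_SR_is G EG Out_M)))"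
  unfolding Let_def
  by (intro conjI allI impI) (use triangle_outcome in \<open>blast intro: tree_outcome even_cycle_outcome
      odd_cycle_outcome petersen_outcome multipartite_outcome_B multipartite_outcome_N
      multipartite_outcome_M\<close>)+

end
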